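(* Let $0<p<\infty$, let $\mu$ be a finite positive Borel measure on the closed unit disc $\overline{\mathbb{D}}$, and let $l$ be any positive integer with $pl>1$. For $\lambda\in\mathbb{D}$ put $k_\lambda(z)=\frac{1}{1-\overline{\lambda}z}$ and $K_\lambda=k_\lambda^l/\|k_\lambda^l\|_{H^p}$. The following are equivalent: (i) there is $C>0$ with $\int_{\overline{\mathbb{D}}}|f|^p\,d\mu\ge C\|f\|_{H^p}^p$ for all $f\in C(\overline{\mathbb{D}})\cap H^p$; (ii) there is $C>0$ with $\int_{\overline{\mathbb{D}}}|K_\lambda|^p\,d\mu\ge C$ for all $\lambda\in\mathbb{D}$; (iii) there is $C>0$ with $\mu(I)\ge C\,m(I)$ for all arcs $I\subset\partial\mathbb{D}$.
   Context: $H^p=H^p(\mathbb{D})$ ($0<p<\infty$) is the space of holomorphic $f$ on the unit disc $\mathbb{D}$ with $\|f\|_{H^p}^p=\sup_{0<r<1}\int_0^1|f(re^{2\pi it})|^p\,dt<\infty$. $m$ denotes normalized Lebesgue (arc-length) measure on $\partial\mathbb{D}$. For $f\in C(\overline{\mathbb{D}})$ the integral over $\overline{\mathbb{D}}$ uses the values of $f$ on the closed disc. *)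

theory Defs
  imports "HOL-Analysis.Analysis"
begin

definition hardy_pow :: "real \<Rightarrow> (complex \<Rightarrow> complex) \<Rightarrow> ennreal" where
  "hardy_pow p f = (SUP r\<in>{0<..<1::real}.
      (\<integral>\<^sup>+ t\<in>{0..1::real}. ennreal (cmod (f (complex_of_real r * cis (2 * pi * t))) powr p) \<partial>lborel))"

definition in_hardy :: "real \<Rightarrow> (complex \<Rightarrow> complex) \<Rightarrow> bool" where
  "in_hardy p f \<longleftrightarrow> f holomorphic_on ball 0 1 \<and> hardy_pow p f < \<infinity>"

definition hardy_norm :: "real \<Rightarrow> (complex \<Rightarrow> complex) \<Rightarrow> real" where
  "hardy_norm p f = enn2real (hardy_pow p f) powr (1 / p)"

definition circle_measure :: "complex measure" where
  "circle_measure = distr (restrict_space lborel {0..1::real}) borel (\<lambda>t. cis (2 * pi * t))"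

text \<open>Arcs of the unit circle (open, closed or half-open, nondegenerate).\<close>
definition is_arc :: "complex set \<Rightarrow> bool" where
  "is_arc I \<longleftrightarrow> (\<exists>a b::real. a < b \<and> b \<le> a + 1 \<and>
      (\<lambda>t. cis (2 * pi * t)) ` {a<..<b} \<subseteq> I \<and> I \<subseteq> (\<lambda>t. cis (2 * pi * t)) ` {a..b})"

definition kernel :: "complex \<Rightarrow> complex \<Rightarrow> complex" where
  "kernel a z = 1 / (1 - cnj a * z)"

definition norm_kernel :: "real \<Rightarrow> nat \<Rightarrow> complex \<Rightarrow> complex \<Rightarrow> complex" where
  "norm_kernel p l a z = kernel a z ^ l / complex_of_real (hardy_norm p (\<lambda>w. kernel a w ^ l))"

end

theory Submission
  imports Defs "HOL-Complex_Analysis.Complex_Analysis" "HOL-Library.Periodic_Fun"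
begin

text \<open>
  Write e(t) = cis (2 pi t).

  (iii) \<Rightarrow> (i): for f continuous on the closed disc, the integral means
  M_p(r, f) = \<integral>|f(r e(t))|^p dt over t \<in> [0, 1] increase in r (|f|^p is subharmonic: divide out the
  finitely many zeros in a slightly larger disc by Blaschke factors and use the Poisson
  formula for the zero-free quotient, whose p-th power has a holomorphic p-th root), so
  \<parallel>f\<parallel>_p^p \<le> M_p(1, f). Approximating |f|^p on the circle from below by step functions
  on arcs, the arc condition gives M_p(1, f) \<le> C^{-1} \<integral>|f|^p d\<mu>.

  (i) \<Rightarrow> (ii): K_\<lambda> is admissible in (i) and has norm 1.

  (ii) \<Rightarrow> (iii): integrate (ii) over \<lambda> = \<rho> e(t), t \<in> [a, b], and swap the integrals.
  For z near the arc e([a, b]) the t-integral of |K_\<lambda>(z)|^p is at most 1, because the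
  kernels are rotations of each other and M_p(r, k_\<rho>^l) increases in r. Away from the arc
  it is O(\<parallel>k_\<rho>^l\<parallel>_p^{-p}), and \<parallel>k_\<rho>^l\<parallel>_p \<rightarrow> \<infinity> as \<rho> \<rightarrow> 1 since pl > 1. Hence
  \<mu>(\<delta>-neighbourhood of the arc) \<ge> C (b - a) for every \<delta>, and \<delta> \<rightarrow> 0 gives the closed arc;
  shrinking the arc handles the open and half-open ones.
\<close>

definition circle_mean :: "real \<Rightarrow> (complex \<Rightarrow> complex) \<Rightarrow> real \<Rightarrow> real" where
  "circle_mean p f r = integral {0..1} (\<lambda>t. cmod (f (of_real r * cis (2*pi*t))) powr p)"

section \<open>The Poisson formula on circles about the origin\<close>

lemma circlepath_0_eq_cis: "circlepath 0 \<rho> t = complex_of_real \<rho> * cis (2*pi*t)"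
  by (simp add: circlepath cis_conv_exp mult_ac)

lemma vector_derivative_circlepath_0:
  "vector_derivative (circlepath 0 \<rho>) (at t) = 2*pi*\<i>*(complex_of_real \<rho> * cis (2*pi*t))"
  by (simp add: vector_derivative_circlepath cis_conv_exp mult_ac)

lemma has_integral_circlepath_0:
  assumes "(f has_contour_integral I) (circlepath 0 \<rho>)"
  shows "((\<lambda>t. f (of_real \<rho> * cis (2*pi*t)) * (of_real \<rho> * cis (2*pi*t))) has_integral I / (2*pi*\<i>)) {0..1}"
proof -
  have "((\<lambda>t. (2*pi*\<i>) * (f (of_real \<rho> * cis (2*pi*t)) * (of_real \<rho> * cis (2*pi*t)))) has_integral I) {0..1}"
    using assms by (simp add: has_contour_integral circlepath_0_eq_cis vector_derivative_circlepath_0 mult_ac)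
  from has_integral_mult_right[OF this, of "1 / (2*pi*\<i>)"] show ?thesis by simp
qed

lemma Cauchy_integral_formula_cis:
  assumes "H holomorphic_on ball 0 R" "0 < \<rho>" "\<rho> < R" "norm z < \<rho>"
  shows "((\<lambda>t. H (of_real \<rho> * cis (2*pi*t)) * (of_real \<rho> * cis (2*pi*t)) / (of_real \<rho> * cis (2*pi*t) - z))
          has_integral H z) {0..1}"
proof -
  have "H holomorphic_on cball 0 \<rho>" using assms by (auto elim!: holomorphic_on_subset)
  with assms have "((\<lambda>u. H u / (u - z)) has_contour_integral (2*pi*\<i> * H z)) (circlepath 0 \<rho>)"
    using Cauchy_integral_circlepath_simple by simp
  from has_integral_circlepath_0[OF this] show ?thesis by (simp add: mult_ac)
qed

text \<open>The reflected Cauchy kernel: its pole \<rho>^2 / cnj z lies outside the circle.\<close>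

lemma Cauchy_integral_reflected_cis:
  assumes "H holomorphic_on ball 0 R" "0 < \<rho>" "\<rho> < R" "norm z < \<rho>"
  shows "((\<lambda>t. H (of_real \<rho> * cis (2*pi*t)) * (cnj z * (of_real \<rho> * cis (2*pi*t)))
              / (of_real (\<rho>^2) - cnj z * (of_real \<rho> * cis (2*pi*t)))) has_integral 0) {0..1}"
proof (cases "z = 0")
  case False
  define S :: "complex set" where "S = ball 0 R \<inter> ball 0 (\<rho>^2 / norm z)"
  have nz: "of_real (\<rho>^2) - cnj z * u \<noteq> 0" if "u \<in> S" for u :: complex
  proof
    assume "of_real (\<rho>^2) - cnj z * u = 0"
    hence "norm (cnj z * u) = \<rho>^2"
      by (metis eq_iff_diff_eq_0 norm_of_real abs_power2 power2_abs abs_of_nonneg zero_le_power2)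
    moreover have "norm z * norm u < \<rho>^2" using that False by (simp add: S_def field_simps)
    ultimately show False by (simp add: norm_mult)
  qed
  have "(\<lambda>u. H u * cnj z / (of_real (\<rho>^2) - cnj z * u)) holomorphic_on S"
    using nz by (intro holomorphic_intros holomorphic_on_subset[OF assms(1)]) (auto simp: S_def)
  moreover have "path_image (circlepath 0 \<rho>) \<subseteq> S"
  proof -
    have "\<rho> < \<rho>^2 / norm z" using assms False by (simp add: field_simps power2_eq_square)
    thus ?thesis using assms by (auto simp: S_def path_image_circlepath)
  qed
  ultimately have "((\<lambda>u. H u * cnj z / (of_real (\<rho>^2) - cnj z * u)) has_contour_integral 0) (circlepath 0 \<rho>)"
    by (intro Cauchy_theorem_convex_simple) (auto simp: S_def intro: convex_Int)
  from has_integral_circlepath_0[OF this] show ?thesis by (simp add: mult_ac)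
qed simp

definition poisson_kernel :: "real \<Rightarrow> complex \<Rightarrow> real \<Rightarrow> real" where
  "poisson_kernel \<rho> z t = (\<rho>^2 - (cmod z)^2) / (cmod (of_real \<rho> * cis (2*pi*t) - z))^2"

lemma Cauchy_kernels_sum_eq_poisson:
  assumes "cmod w = \<rho>" "cmod z < \<rho>"
  shows "w / (w - z) + cnj z * w / (of_real (\<rho>^2) - cnj z * w)
       = of_real ((\<rho>^2 - (cmod z)^2) / (cmod (w - z))^2)"
proof -
  have wz: "w - z \<noteq> 0" and w0: "w \<noteq> 0" using assms by auto
  hence cwz: "cnj w - cnj z \<noteq> 0" by (metis complex_cnj_diff complex_cnj_zero_iff)
  have ww: "w * cnj w = of_real (\<rho>^2)" using assms(1) complex_norm_square[of w] by metis
  have zz: "z * cnj z = of_real ((cmod z)^2)" using complex_norm_square[of z] by metis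
  have d: "of_real (\<rho>^2) - cnj z * w = w * (cnj w - cnj z)" using ww by (simp add: algebra_simps)
  have n2: "of_real ((cmod (w - z))^2) = (w - z) * (cnj w - cnj z)"
    using complex_norm_square[of "w - z"] by simp
  have "w / (w - z) + cnj z * w / (of_real (\<rho>^2) - cnj z * w) = w / (w - z) + cnj z / (cnj w - cnj z)"
    using d w0 by simp
  also have "\<dots> = (w * cnj w - z * cnj z) / ((w - z) * (cnj w - cnj z))"
    using wz cwz by (simp add: field_simps)
  also have "\<dots> = of_real ((\<rho>^2 - (cmod z)^2) / (cmod (w - z))^2)"
    using ww zz n2 by simp
  finally show ?thesis .
qed

lemma Poisson_integral_formula:
  assumes "H holomorphic_on ball 0 R" "0 < \<rho>" "\<rho> < R" "norm z < \<rho>"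
  shows "((\<lambda>t. H (of_real \<rho> * cis (2*pi*t)) * of_real (poisson_kernel \<rho> z t)) has_integral H z) {0..1}"
proof -
  have "H w * w / (w - z) + H w * (cnj z * w) / (of_real (\<rho>^2) - cnj z * w)
      = H w * of_real ((\<rho>^2 - (cmod z)^2) / (cmod (w - z))^2)" if "cmod w = \<rho>" for w
    using Cauchy_kernels_sum_eq_poisson[OF that assms(4)]
    by (simp add: distrib_left[symmetric] times_divide_eq_right[symmetric] del: times_divide_eq_right)
  hence "H (of_real \<rho> * cis (2*pi*t)) * (of_real \<rho> * cis (2*pi*t)) / (of_real \<rho> * cis (2*pi*t) - z)
     + H (of_real \<rho> * cis (2*pi*t)) * (cnj z * (of_real \<rho> * cis (2*pi*t)))
         / (of_real (\<rho>^2) - cnj z * (of_real \<rho> * cis (2*pi*t)))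
     = H (of_real \<rho> * cis (2*pi*t)) * of_real (poisson_kernel \<rho> z t)" for t
    using assms(2) by (simp add: poisson_kernel_def norm_mult)
  with has_integral_add[OF Cauchy_integral_formula_cis[OF assms] Cauchy_integral_reflected_cis[OF assms]]
  show ?thesis by simp
qed

lemma poisson_kernel_pos:
  assumes "cmod z < \<rho>"
  shows "poisson_kernel \<rho> z t > 0"
proof -
  have "0 \<le> \<rho>" using assms norm_ge_zero[of z] by linarith
  hence "cmod (of_real \<rho> * cis (2*pi*t)) = \<rho>" by (simp add: norm_mult)
  hence "of_real \<rho> * cis (2*pi*t) \<noteq> z" using assms by auto
  moreover have "(cmod z)^2 < \<rho>^2" using assms by (intro power_strict_mono) auto
  ultimately show ?thesis unfolding poisson_kernel_def by (intro divide_pos_pos) auto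
qed

lemma poisson_kernel_integral:
  assumes "0 < \<rho>" "cmod z < \<rho>"
  shows "((\<lambda>t. poisson_kernel \<rho> z t) has_integral 1) {0..1}"
proof -
  have "((\<lambda>t. complex_of_real (poisson_kernel \<rho> z t)) has_integral of_real 1) {0..1}"
    using Poisson_integral_formula[of "\<lambda>_. 1" "\<rho> + 1"] assms by simp
  from has_integral_linear[OF this bounded_linear_Re] show ?thesis by (simp add: o_def)
qed

lemma norm_diff_cis_squared:
  "(cmod (of_real \<rho> * cis a - of_real r * cis b))^2 = \<rho>^2 + r^2 - 2*\<rho>*r*(cos a * cos b + sin a * sin b)"
proof -
  have "(cmod (of_real \<rho> * cis a - of_real r * cis b))^2 = (\<rho> * cos a - r * cos b)^2 + (\<rho> * sin a - r * sin b)^2"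
    by (simp add: cmod_power2)
  also have "\<dots> = \<rho>^2 + r^2 - 2*\<rho>*r*(cos a * cos b + sin a * sin b)"
    using sin_cos_squared_add[of a] sin_cos_squared_add[of b] by algebra
  finally show ?thesis .
qed

lemma poisson_kernel_swap:
  assumes "0 \<le> r"
  shows "poisson_kernel \<rho> (of_real r * cis (2*pi*t)) s = poisson_kernel \<rho> (of_real r * cis (2*pi * s)) t"
proof -
  have "(cmod (of_real \<rho> * cis (2*pi * s) - of_real r * cis (2*pi*t)))^2
      = (cmod (of_real \<rho> * cis (2*pi*t) - of_real r * cis (2*pi * s)))^2"
    unfolding norm_diff_cis_squared by (simp add: algebra_simps)
  thus ?thesis using assms unfolding poisson_kernel_def by (simp add: norm_mult)
qed

lemma continuous_on_poisson_kernel: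
  assumes "0 \<le> r" "r < \<rho>"
  shows "continuous_on UNIV (\<lambda>(t,s). poisson_kernel \<rho> (of_real r * cis (2*pi*t)) s)"
proof -
  have "of_real \<rho> * cis (2*pi * s) \<noteq> of_real r * cis (2*pi*t)" for s t
  proof
    assume "of_real \<rho> * cis (2*pi * s) = of_real r * cis (2*pi*t)"
    hence "cmod (of_real \<rho> * cis (2*pi * s)) = cmod (of_real r * cis (2*pi*t))" by simp
    thus False using assms by (simp add: norm_mult)
  qed
  thus ?thesis unfolding poisson_kernel_def case_prod_unfold by (intro continuous_intros) auto
qed

section \<open>Monotonicity of the integral means\<close>

lemma continuous_on_norm_powr:
  assumes "continuous_on S F" "0 < p"
  shows "continuous_on S (\<lambda>z. cmod (F z) powr p)"
  using assms by (intro continuous_on_powr' continuous_intros) auto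

lemma continuous_on_circle_param:
  assumes "continuous_on (cball 0 R) F" "0 \<le> r" "r \<le> R"
  shows "continuous_on UNIV (\<lambda>t. F (of_real r * cis (2*pi*t)))"
  by (rule continuous_on_compose2[OF assms(1)]) (use assms in \<open>auto intro!: continuous_intros simp: norm_mult\<close>)

lemma circle_mean_integrable:
  assumes "continuous_on (cball 0 R) F" "0 \<le> r" "r \<le> R" "0 < p"
  shows "(\<lambda>t. cmod (F (of_real r * cis (2*pi*t))) powr p) integrable_on {0..1}"
  using continuous_on_norm_powr[OF continuous_on_circle_param[OF assms(1-3)] assms(4)]
  by (rule integrable_continuous_interval[OF continuous_on_subset]) auto

lemma circle_mean_nonneg:
  assumes "continuous_on (cball 0 R) F" "0 \<le> r" "r \<le> R" "0 < p"
  shows "0 \<le> circle_mean p F r"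
  unfolding circle_mean_def by (rule integral_nonneg[OF circle_mean_integrable[OF assms]]) simp

lemma nn_integral_circle_eq_circle_mean:
  assumes "continuous_on (cball 0 R) F" "0 \<le> r" "r \<le> R" "0 < p"
  shows "(\<integral>\<^sup>+ t\<in>{0..1::real}. ennreal (cmod (F (of_real r * cis (2*pi*t))) powr p) \<partial>lborel)
       = ennreal (circle_mean p F r)"
  unfolding circle_mean_def
  by (rule nn_integral_has_integral_lebesgue') (auto intro!: integrable_integral circle_mean_integrable[OF assms])

lemma norm_le_poisson_integral:
  assumes H: "H holomorphic_on ball 0 R" and \<rho>: "0 < \<rho>" "\<rho> < R" and z: "cmod z < \<rho>"
    and int: "(\<lambda>s. cmod (H (of_real \<rho> * cis (2*pi * s))) * poisson_kernel \<rho> z s) integrable_on {0..1}"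
  shows "cmod (H z) \<le> integral {0..1} (\<lambda>s. cmod (H (of_real \<rho> * cis (2*pi * s))) * poisson_kernel \<rho> z s)"
proof -
  note I = Poisson_integral_formula[OF H \<rho> z]
  have "cmod (integral {0..1} (\<lambda>s. H (of_real \<rho> * cis (2*pi * s)) * of_real (poisson_kernel \<rho> z s)))
      \<le> integral {0..1} (\<lambda>s. cmod (H (of_real \<rho> * cis (2*pi * s))) * poisson_kernel \<rho> z s)"
    using I int poisson_kernel_pos[OF z] by (intro integral_norm_bound_integral) (auto simp: norm_mult less_imp_le)
  thus ?thesis using integral_unique[OF I] by simp
qed

text \<open>Integrate the Poisson bound over the smaller circle and swap the integrals: by
  symmetry the Poisson kernel also integrates to 1 in its other variable.\<close>

lemma circle_mean_1_mono:
  assumes H: "H holomorphic_on ball 0 R" and r: "0 \<le> r" "r < \<rho>" "\<rho> < R"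
  shows "circle_mean 1 H r \<le> circle_mean 1 H \<rho>"
proof -
  have \<rho>0: "0 < \<rho>" using r by simp
  have contH: "continuous_on (cball 0 \<rho>) H"
    using H r by (auto intro: holomorphic_on_imp_continuous_on elim!: holomorphic_on_subset)
  define F where "F = (\<lambda>t s. cmod (H (of_real \<rho> * cis (2*pi * s))) * poisson_kernel \<rho> (of_real r * cis (2*pi*t)) s)"
  have contF: "continuous_on UNIV (\<lambda>(t,s). F t s)"
  proof -
    have "continuous_on UNIV (\<lambda>x. H (of_real \<rho> * cis (2*pi * snd x)))"
      by (rule continuous_on_compose2[OF continuous_on_circle_param[OF contH], where f=snd])
         (use \<rho>0 in \<open>auto intro: continuous_intros\<close>)
    moreover have "continuous_on UNIV (\<lambda>x. poisson_kernel \<rho> (of_real r * cis (2*pi*fst x)) (snd x))"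
      using continuous_on_poisson_kernel[OF r(1,2)] by (simp add: case_prod_unfold)
    ultimately show ?thesis unfolding F_def case_prod_unfold by (intro continuous_intros)
  qed
  have contFt: "continuous_on UNIV (F t)" for t
  proof -
    have "continuous_on UNIV (\<lambda>s. (\<lambda>(t,s). F t s) (t, s))"
      by (rule continuous_on_compose2[OF contF]) (auto intro!: continuous_intros)
    thus ?thesis by simp
  qed
  have pointwise: "cmod (H (of_real r * cis (2*pi*t))) \<le> integral {0..1} (F t)" for t
    unfolding F_def using r \<rho>0 integrable_continuous_interval[OF continuous_on_subset[OF contFt]]
    by (intro norm_le_poisson_integral[OF H]) (auto simp: F_def norm_mult)
  have "integral {0..1} (\<lambda>t. cmod (H (of_real r * cis (2*pi*t)))) \<le> integral {0..1} (\<lambda>t. integral {0..1} (F t))"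
  proof (rule integral_le)
    show "(\<lambda>t. cmod (H (of_real r * cis (2*pi*t)))) integrable_on {0..1}"
      using circle_mean_integrable[OF contH r(1), of 1] r by simp
    have "continuous_on UNIV (\<lambda>t. integral (cbox 0 1) (F t))"
      using contF continuous_on_subset by (intro integral_continuous_on_param) blast
    thus "(\<lambda>t. integral {0..1} (F t)) integrable_on {0..1}"
      by (intro integrable_continuous_interval) (auto simp: cbox_interval elim: continuous_on_subset)
  qed (use pointwise in simp)
  also have "\<dots> = integral {0..1} (\<lambda>s. integral {0..1} (\<lambda>t. F t s))"
    using integral_swap_continuous[of 0 0 1 1 "\<lambda>t s. F t s"] contF continuous_on_subset by fastforce
  also have "\<dots> = integral {0..1} (\<lambda>s. cmod (H (of_real \<rho> * cis (2*pi * s))))"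
  proof (rule integral_cong)
    fix s :: real
    have zr: "cmod (of_real r * cis (2*pi * s)) < \<rho>" using r by (simp add: norm_mult)
    have "integral {0..1} (\<lambda>t. poisson_kernel \<rho> (of_real r * cis (2*pi*t)) s) = 1"
      using poisson_kernel_swap[OF r(1)] integral_unique[OF poisson_kernel_integral[OF \<rho>0 zr]] by simp
    thus "integral {0..1} (\<lambda>t. F t s) = cmod (H (of_real \<rho> * cis (2*pi * s)))" by (simp add: F_def)
  qed
  finally show ?thesis by (simp add: circle_mean_def)
qed

lemma circle_mean_mono_nonzero:
  assumes H: "H holomorphic_on ball 0 R" and nz: "\<And>z. z \<in> ball 0 R \<Longrightarrow> H z \<noteq> 0"
    and r: "0 \<le> r" "r < \<rho>" "\<rho> < R" and p: "0 < p"
  shows "circle_mean p H r \<le> circle_mean p H \<rho>"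
proof -
  obtain g where g: "g holomorphic_on ball 0 R" "\<And>z. z \<in> ball 0 R \<Longrightarrow> H z = exp (g z)"
    using contractible_imp_holomorphic_log[OF H convex_imp_contractible[OF convex_ball] nz] by metis
  define G where "G = (\<lambda>z. exp (of_real p * g z))"
  have "G holomorphic_on ball 0 R" unfolding G_def by (intro holomorphic_intros g)
  moreover have "circle_mean p H x = circle_mean 1 G x" if "0 \<le> x" "x < R" for x
  proof -
    have "cmod (H z) powr p = cmod (G z) powr 1" if "z \<in> ball 0 R" for z
      using g(2)[OF that] by (simp add: G_def powr_def)
    thus ?thesis using that unfolding circle_mean_def by (intro integral_cong) (simp add: norm_mult)
  qed
  ultimately show ?thesis using circle_mean_1_mono[of G R r \<rho>] r by simp
qed

lemma holomorphic_factor_zero_global: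
  assumes holf: "f holomorphic_on S" and S: "open S" "connected S"
    and a: "a \<in> S" "f a = 0" and nonconst: "\<not> f constant_on S"
  obtains h m where "0 < m" "h holomorphic_on S" "h a \<noteq> 0" "\<And>z. z \<in> S \<Longrightarrow> f z = (z - a)^m * h z"
proof -
  obtain g r m where gm: "0 < m" "0 < r" "ball a r \<subseteq> S" "g holomorphic_on ball a r"
      "\<And>w. w \<in> ball a r \<Longrightarrow> f w = (w - a)^m * g w" "\<And>w. w \<in> ball a r \<Longrightarrow> g w \<noteq> 0"
    using holomorphic_factor_zero_nonconstant[OF holf S a nonconst] by metis
  define h where "h = (\<lambda>z. if z \<in> ball a r then g z else f z / (z - a)^m)"
  have "h holomorphic_on ball a r \<union> (S - {a})"
  proof (intro holomorphic_on_Un open_ball open_delete S)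
    show "h holomorphic_on ball a r" by (rule holomorphic_transform[OF gm(4)]) (simp add: h_def)
    show "h holomorphic_on S - {a}"
    proof (rule holomorphic_transform[of "\<lambda>z. f z / (z - a)^m"])
      show "(\<lambda>z. f z / (z - a)^m) holomorphic_on S - {a}"
        by (intro holomorphic_intros holomorphic_on_subset[OF holf]) auto
    qed (use gm(5) in \<open>auto simp: h_def\<close>)
  qed
  moreover have "ball a r \<union> (S - {a}) = S" using gm(2,3) by auto
  moreover have "h a \<noteq> 0" using gm(2,6) by (simp add: h_def)
  moreover have "f z = (z - a)^m * h z" if "z \<in> S" for z
    using gm(1,5) by (cases "z = a") (auto simp: h_def a)
  ultimately show ?thesis using that gm(1) by metis
qed

lemma norm_blaschke_identity:
  fixes a z :: complex
  shows "(cmod (of_real \<rho> * (z - a)))^2 + (\<rho>^2 - (cmod z)^2) * (\<rho>^2 - (cmod a)^2)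
       = (cmod (of_real (\<rho>^2) - cnj a * z))^2"
  unfolding cmod_power2 by (simp add: power2_eq_square) algebra

lemma norm_blaschke_le:
  assumes "cmod a < \<rho>" "cmod z \<le> \<rho>"
  shows "\<rho> * cmod (z - a) \<le> cmod (of_real (\<rho>^2) - cnj a * z)"
    and "cmod z = \<rho> \<Longrightarrow> \<rho> * cmod (z - a) = cmod (of_real (\<rho>^2) - cnj a * z)"
proof -
  have \<rho>: "0 \<le> \<rho>" using assms(1) norm_ge_zero[of a] by linarith
  have eq: "cmod (of_real \<rho> * (z - a)) = \<rho> * cmod (z - a)" using \<rho> by (simp add: norm_mult)
  note id = norm_blaschke_identity[of \<rho> z a, unfolded eq]
  have "(cmod a)^2 \<le> \<rho>^2" "(cmod z)^2 \<le> \<rho>^2"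
    using assms by (simp_all add: power_mono)
  hence "0 \<le> (\<rho>^2 - (cmod z)^2) * (\<rho>^2 - (cmod a)^2)" by simp
  hence "(\<rho> * cmod (z - a))^2 \<le> (cmod (of_real (\<rho>^2) - cnj a * z))^2" using id by linarith
  thus "\<rho> * cmod (z - a) \<le> cmod (of_real (\<rho>^2) - cnj a * z)"
    by (rule power2_le_imp_le) simp
  assume "cmod z = \<rho>"
  hence "(\<rho> * cmod (z - a))^2 = (cmod (of_real (\<rho>^2) - cnj a * z))^2" using id by simp
  thus "\<rho> * cmod (z - a) = cmod (of_real (\<rho>^2) - cnj a * z)"
    using \<rho> by (subst (asm) power2_eq_iff_nonneg) auto
qed

text \<open>G is f divided by the m-th power of the Blaschke factor \<rho>(z - a) / (\<rho>^2 - cnj a z),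
  m the order of the zero at a; R' keeps the pole \<rho>^2 / cnj a of that factor outside.\<close>

lemma blaschke_divide_zero:
  assumes holf: "f holomorphic_on ball 0 R" and a: "a \<in> ball 0 R" "f a = 0" "cmod a < \<rho>" "\<rho> < R"
    and nonconst: "\<not> f constant_on ball 0 R"
  obtains G R' where "\<rho> < R'" "R' \<le> R" "G holomorphic_on ball 0 R'"
    "\<And>z. z \<in> ball 0 R' \<Longrightarrow> G z = 0 \<longleftrightarrow> z \<noteq> a \<and> f z = 0"
    "\<And>z. cmod z \<le> \<rho> \<Longrightarrow> cmod (f z) \<le> cmod (G z)"
    "\<And>z. cmod z = \<rho> \<Longrightarrow> cmod (f z) = cmod (G z)"
proof -
  have \<rho>0: "0 < \<rho>" using a(3) norm_ge_zero[of a] by linarith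
  obtain h m where hm: "0 < m" "h holomorphic_on ball 0 R" "h a \<noteq> 0"
      "\<And>z. z \<in> ball 0 R \<Longrightarrow> f z = (z - a)^m * h z"
    using holomorphic_factor_zero_global[OF holf open_ball connected_ball a(1,2) nonconst] by metis
  define R' where "R' = (if a = 0 then R else min R (\<rho>^2 / cmod a))"
  have \<rho>R': "\<rho> < R'"
  proof (cases "a = 0")
    case False
    hence "\<rho> * cmod a < \<rho>^2" using a \<rho>0 by (simp add: power2_eq_square)
    thus ?thesis using False a by (simp add: R'_def field_simps)
  qed (use a in \<open>simp add: R'_def\<close>)
  have R'R: "R' \<le> R" by (simp add: R'_def)
  define c where "c = (\<lambda>z. of_real (\<rho>^2) - cnj a * z)"
  have c_nz: "c z \<noteq> 0" if "z \<in> ball 0 R'" for z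
  proof (cases "a = 0")
    case False
    have "cmod a * cmod z < \<rho>^2" using that False by (simp add: R'_def field_simps)
    hence "cmod (cnj a * z) \<noteq> cmod (of_real (\<rho>^2) :: complex)" by (simp add: norm_mult norm_power)
    thus ?thesis unfolding c_def by (metis eq_iff_diff_eq_0)
  qed (use \<rho>0 in \<open>simp add: c_def\<close>)
  define G where "G = (\<lambda>z. h z * (c z / of_real \<rho>)^m)"
  have "G holomorphic_on ball 0 R'"
    unfolding G_def c_def by (intro holomorphic_intros holomorphic_on_subset[OF hm(2)]) (use R'R in auto)
  moreover have "G z = 0 \<longleftrightarrow> z \<noteq> a \<and> f z = 0" if "z \<in> ball 0 R'" for z
    using c_nz[OF that] \<rho>0 hm(3) hm(4)[of z] that R'R by (auto simp: G_def)
  moreover have norms: "cmod (f z) = cmod (z - a)^m * cmod (h z)" "cmod (G z) = (cmod (c z) / \<rho>)^m * cmod (h z)"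
    if "cmod z \<le> \<rho>" for z
    using hm(4)[of z] that \<rho>R' R'R \<rho>0 by (auto simp: G_def norm_mult norm_power norm_divide)
  moreover have "cmod (f z) \<le> cmod (G z)" if "cmod z \<le> \<rho>" for z
  proof -
    have "cmod (z - a) \<le> cmod (c z) / \<rho>"
      using norm_blaschke_le(1)[OF a(3) that] \<rho>0 by (simp add: c_def field_simps)
    thus ?thesis unfolding norms[OF that] by (intro mult_right_mono power_mono) auto
  qed
  moreover have "cmod (f z) = cmod (G z)" if "cmod z = \<rho>" for z
  proof -
    have "cmod (z - a) = cmod (c z) / \<rho>"
      using norm_blaschke_le(2)[OF a(3) _ that] that \<rho>0 by (simp add: c_def field_simps)
    thus ?thesis using that by (simp add: norms)
  qed
  ultimately show ?thesis using that \<rho>R' R'R by blast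
qed

lemma circle_mean_mono_finite_zeros:
  assumes "finite {z\<in>ball 0 R. f z = 0}" "f holomorphic_on ball 0 R" "{z\<in>ball 0 R. f z = 0} \<subseteq> ball 0 \<rho>"
    and r: "0 \<le> r" "r < \<rho>" "\<rho> < R" and p: "0 < p"
  shows "circle_mean p f r \<le> circle_mean p f \<rho>"
  using assms(1-3,6)
proof (induction "card {z\<in>ball 0 R. f z = 0}" arbitrary: f R)
  case 0
  hence "f z \<noteq> 0" if "z \<in> ball 0 R" for z using that by auto
  with circle_mean_mono_nonzero[OF "0.prems"(2) _ r(1,2) "0.prems"(4) p] show ?case by blast
next
  case (Suc n)
  hence "{z\<in>ball 0 R. f z = 0} \<noteq> {}" by (metis card.empty nat.distinct(1))
  then obtain a where a: "a \<in> ball 0 R" "f a = 0" by blast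
  hence a: "a \<in> ball 0 R" "f a = 0" "cmod a < \<rho>" using Suc.prems(3) by auto
  have nonconst: "\<not> f constant_on ball 0 R"
  proof
    assume "f constant_on ball 0 R"
    with a have "{z\<in>ball 0 R. f z = 0} = ball 0 R" by (auto simp: constant_on_def)
    with Suc.prems(1) have "finite (ball (0::complex) R)" by simp
    thus False using finite_imp_not_open[of "ball (0::complex) R"] a(1) norm_ge_zero[of a] by auto
  qed
  obtain G R' where G: "\<rho> < R'" "R' \<le> R" "G holomorphic_on ball 0 R'"
      "\<And>z. z \<in> ball 0 R' \<Longrightarrow> G z = 0 \<longleftrightarrow> z \<noteq> a \<and> f z = 0"
      "\<And>z. cmod z \<le> \<rho> \<Longrightarrow> cmod (f z) \<le> cmod (G z)" "\<And>z. cmod z = \<rho> \<Longrightarrow> cmod (f z) = cmod (G z)"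
    using blaschke_divide_zero[OF Suc.prems(2) a Suc.prems(4) nonconst] by metis
  have zeros: "{z\<in>ball 0 R'. G z = 0} = {z\<in>ball 0 R. f z = 0} - {a}"
    using G(1,2,4) Suc.prems(3) by auto
  have "circle_mean p f r \<le> circle_mean p G r"
    unfolding circle_mean_def
  proof (rule integral_le)
    show "(\<lambda>t. cmod (f (of_real r * cis (2*pi*t))) powr p) integrable_on {0..1}"
      using Suc.prems(2,4) r p by (intro circle_mean_integrable[of \<rho>] holomorphic_on_imp_continuous_on)
        (auto elim!: holomorphic_on_subset)
    show "(\<lambda>t. cmod (G (of_real r * cis (2*pi*t))) powr p) integrable_on {0..1}"
      using G(1,3) r p by (intro circle_mean_integrable[of \<rho>] holomorphic_on_imp_continuous_on)
        (auto elim!: holomorphic_on_subset)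
    fix t :: real
    have "cmod (f (of_real r * cis (2*pi*t))) \<le> cmod (G (of_real r * cis (2*pi*t)))"
      using r by (intro G(5)) (simp add: norm_mult)
    thus "cmod (f (of_real r * cis (2*pi*t))) powr p \<le> cmod (G (of_real r * cis (2*pi*t))) powr p"
      using p by (intro powr_mono2) auto
  qed
  also have "\<dots> \<le> circle_mean p G \<rho>"
  proof (rule Suc.hyps(1))
    show "n = card {z\<in>ball 0 R'. G z = 0}" using zeros Suc.hyps(2) Suc.prems(1) a by simp
  qed (use zeros Suc.prems(1,3) G(1,3) in auto)
  also have "\<dots> = circle_mean p f \<rho>"
    unfolding circle_mean_def using G(6) r by (intro integral_cong) (simp add: norm_mult)
  finally show ?case .
qed

lemma zero_free_annulus:
  assumes holf: "f holomorphic_on ball 0 1" and nz: "\<exists>z\<in>ball 0 1. f z \<noteq> 0" and lo: "lo < 1"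
  obtains \<rho> R where "lo < \<rho>" "\<rho> < R" "R < 1" "finite {z\<in>ball 0 R. f z = 0}" "{z\<in>ball 0 R. f z = 0} \<subseteq> ball 0 \<rho>"
proof -
  define R0 where "R0 = (max lo 0 + 1) / 2"
  have R0: "lo < R0" "R0 < 1" "0 < R0" using lo by (auto simp: R0_def)
  define W where "W = {z\<in>cball 0 R0. f z = 0}"
  have fW: "finite W"
  proof (cases "f constant_on ball 0 1")
    case True
    then obtain c where c: "\<And>z. z \<in> ball 0 1 \<Longrightarrow> f z = c" by (auto simp: constant_on_def)
    with nz have "W = {}" using R0 by (auto simp: W_def)
    thus ?thesis by simp
  next
    case False
    show ?thesis unfolding W_def
      by (rule holomorphic_compact_finite_zeros[OF holf open_ball connected_ball compact_cball _ False])
         (use R0 in auto)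
  qed
  define M where "M = cmod ` W"
  have fM: "finite M" using fW by (simp add: M_def)
  have "infinite ({lo<..<R0} - M)" using fM R0 by (intro Diff_infinite_finite) auto
  then obtain \<rho> where \<rho>: "\<rho> \<in> {lo<..<R0}" "\<rho> \<notin> M" by (metis Diff_iff finite.emptyI ex_in_conv)
  define R where "R = Min (insert R0 {x\<in>M. x > \<rho>})"
  have fin: "finite (insert R0 {x\<in>M. x > \<rho>})" using fM by simp
  have "\<rho> < R" unfolding R_def using fin \<rho> by (subst Min_gr_iff) auto
  moreover have "R \<le> R0" unfolding R_def using fin by simp
  moreover have sub: "{z\<in>ball 0 R. f z = 0} \<subseteq> W" using \<open>R \<le> R0\<close> by (auto simp: W_def)
  moreover have "{z\<in>ball 0 R. f z = 0} \<subseteq> ball 0 \<rho>"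
  proof
    fix z assume z: "z \<in> {z\<in>ball 0 R. f z = 0}"
    hence zM: "cmod z \<in> M" using sub by (auto simp: M_def)
    have "\<not> cmod z > \<rho>"
    proof
      assume "cmod z > \<rho>"
      hence "R \<le> cmod z" unfolding R_def using fin zM by (intro Min_le) auto
      with z show False by simp
    qed
    moreover have "cmod z \<noteq> \<rho>" using zM \<rho>(2) by auto
    ultimately show "z \<in> ball 0 \<rho>" by simp
  qed
  ultimately show ?thesis using that[of \<rho> R] \<rho> R0 fW finite_subset[OF sub] by auto
qed

text \<open>Pick a radius \<rho> close to 1 with no zeros of f on the annulus \<rho> \<le> |z| < R, apply
  the finite-zeros case there, and let \<rho> \<rightarrow> 1 using uniform continuity of |f|^p.\<close>

lemma circle_mean_le_boundary:
  assumes contf: "continuous_on (cball 0 1) f" and holf: "f holomorphic_on ball 0 1" and p: "0 < p"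
    and r: "0 \<le> r" "r < 1"
  shows "circle_mean p f r \<le> circle_mean p f 1"
proof (cases "\<exists>z\<in>ball 0 1. f z \<noteq> 0")
  case False
  hence "circle_mean p f r = 0" using r by (simp add: circle_mean_def norm_mult)
  thus ?thesis using circle_mean_nonneg[OF contf _ _ p, of 1] by simp
next
  case True
  define \<phi> where "\<phi> = (\<lambda>z. cmod (f z) powr p)"
  have "uniformly_continuous_on (cball 0 1) \<phi>"
    unfolding \<phi>_def by (intro compact_uniformly_continuous continuous_on_norm_powr contf p compact_cball)
  show ?thesis
  proof (rule field_le_epsilon)
    fix e :: real assume e: "0 < e"
    obtain d where d: "d > 0" "\<And>x x'. x \<in> cball 0 1 \<Longrightarrow> x' \<in> cball 0 1 \<Longrightarrow> dist x' x < d \<Longrightarrow> dist (\<phi> x') (\<phi> x) < e"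
      using \<open>uniformly_continuous_on (cball 0 1) \<phi>\<close> e unfolding uniformly_continuous_on_def by metis
    obtain \<rho> R where \<rho>R: "max r (1 - d) < \<rho>" "\<rho> < R" "R < 1" "finite {z\<in>ball 0 R. f z = 0}"
        "{z\<in>ball 0 R. f z = 0} \<subseteq> ball 0 \<rho>"
      using zero_free_annulus[OF holf True, of "max r (1 - d)"] r d by auto
    have "circle_mean p f r \<le> circle_mean p f \<rho>"
      by (rule circle_mean_mono_finite_zeros[OF \<rho>R(4) holomorphic_on_subset[OF holf] \<rho>R(5) r(1) _ \<rho>R(2) p])
         (use \<rho>R in auto)
    also have "\<dots> \<le> integral {0..1} (\<lambda>t. \<phi> (cis (2*pi*t)) + e)"
      unfolding circle_mean_def
    proof (rule integral_le)
      show "(\<lambda>t. cmod (f (of_real \<rho> * cis (2*pi*t))) powr p) integrable_on {0..1}"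
        by (rule circle_mean_integrable[OF contf]) (use \<rho>R r p in auto)
      show "(\<lambda>t. \<phi> (cis (2*pi*t)) + e) integrable_on {0..1}"
        using circle_mean_integrable[OF contf, of 1 p] p by (intro integrable_add) (auto simp: \<phi>_def)
      fix t :: real
      have "of_real \<rho> * cis (2*pi*t) - cis (2*pi*t) = of_real (\<rho> - 1) * cis (2*pi*t)"
        by (simp add: algebra_simps)
      hence "dist (of_real \<rho> * cis (2*pi*t)) (cis (2*pi*t)) = \<bar>\<rho> - 1\<bar>"
        by (simp only: dist_norm norm_mult norm_of_real norm_cis mult_1_right)
      hence "dist (of_real \<rho> * cis (2*pi*t)) (cis (2*pi*t)) < d" using \<rho>R by simp
      moreover have "of_real \<rho> * cis (2*pi*t) \<in> cball 0 1" "cis (2*pi*t) \<in> cball 0 1"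
        using \<rho>R r by (auto simp: norm_mult)
      ultimately have "dist (\<phi> (of_real \<rho> * cis (2*pi*t))) (\<phi> (cis (2*pi*t))) < e" using d(2) by blast
      thus "cmod (f (of_real \<rho> * cis (2*pi*t))) powr p \<le> \<phi> (cis (2*pi*t)) + e"
        by (simp add: \<phi>_def dist_real_def)
    qed
    also have "\<dots> = circle_mean p f 1 + e"
      using circle_mean_integrable[OF contf, of 1 p] p
      by (subst integral_add) (auto simp: \<phi>_def circle_mean_def)
    finally show "circle_mean p f r \<le> circle_mean p f 1 + e" .
  qed
qed

lemma hardy_pow_le_circle_mean:
  assumes contf: "continuous_on (cball 0 1) f" and holf: "f holomorphic_on ball 0 1" and p: "0 < p"
  shows "hardy_pow p f \<le> ennreal (circle_mean p f 1)"
  unfolding hardy_pow_def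
proof (rule SUP_least)
  fix r :: real assume r: "r \<in> {0<..<1}"
  hence "(\<integral>\<^sup>+ t\<in>{0..1::real}. ennreal (cmod (f (of_real r * cis (2*pi*t))) powr p) \<partial>lborel)
      = ennreal (circle_mean p f r)"
    using nn_integral_circle_eq_circle_mean[OF contf _ _ p] by simp
  also have "\<dots> \<le> ennreal (circle_mean p f 1)"
    using circle_mean_le_boundary[OF contf holf p] r by (intro ennreal_leI) simp
  finally show "(\<integral>\<^sup>+ t\<in>{0..1::real}. ennreal (cmod (f (of_real r * cis (2*pi*t))) powr p) \<partial>lborel)
      \<le> ennreal (circle_mean p f 1)" .
qed

section \<open>Arcs and the normalized arc-length measure\<close>

lemma cis_2pi_eqE:
  assumes "cis (2*pi*x) = cis (2*pi*y)"
  obtains n :: int where "x = y + of_int n"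
proof -
  have "exp (\<i> * complex_of_real (2*pi*x)) = exp (\<i> * complex_of_real (2*pi*y))"
    using assms by (simp add: cis_conv_exp)
  then obtain n :: int where "\<i> * complex_of_real (2*pi*x) = \<i> * complex_of_real (2*pi*y) + (of_int (2 * n) * pi) * \<i>"
    by (auto simp: exp_eq)
  hence "\<i> * complex_of_real (2*pi*x) = \<i> * complex_of_real (2*pi*(y + of_int n))"
    by (simp add: algebra_simps)
  hence "complex_of_real (2*pi*x) = complex_of_real (2*pi*(y + of_int n))"
    by (metis complex_i_not_zero mult_cancel_left)
  hence "2*pi*x = 2*pi*(y + of_int n)" using of_real_eq_iff by blast
  thus ?thesis using that by simp
qed

lemma cis_2pi_inj:
  assumes "cis (2*pi*x) = cis (2*pi*y)" "\<bar>x - y\<bar> < 1"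
  shows "x = y"
proof -
  obtain n :: int where n: "x = y + of_int n" using cis_2pi_eqE[OF assms(1)] by blast
  hence "\<bar>of_int n :: real\<bar> < 1" using assms(2) by simp
  thus ?thesis using n by simp
qed

lemma closed_arc_image: "closed ((\<lambda>t. cis (2*pi*t)) ` {a..b})"
  by (intro compact_imp_closed compact_continuous_image continuous_intros compact_Icc)

lemma sets_circle_measure [simp]: "sets circle_measure = sets borel"
  by (simp add: circle_measure_def)

lemma measurable_cis_2pi: "(\<lambda>t::real. cis (2*pi*t)) \<in> borel_measurable borel"
  by (intro borel_measurable_continuous_onI continuous_intros)

lemma cis_2pi_preimage_in_sets:
  assumes "A \<in> sets borel"
  shows "{t\<in>{0..1::real}. cis (2*pi*t) \<in> A} \<in> sets borel"
proof -
  have "{t\<in>{0..1::real}. cis (2*pi*t) \<in> A} = {0..1} \<inter> ((\<lambda>t. cis (2*pi*t)) -` A \<inter> space borel)" by auto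
  thus ?thesis using measurable_sets[OF measurable_cis_2pi assms] by auto
qed

lemma emeasure_circle_measure:
  assumes "A \<in> sets borel"
  shows "emeasure circle_measure A = emeasure lborel {t\<in>{0..1}. cis (2*pi*t) \<in> A}"
proof -
  have m: "(\<lambda>t::real. cis (2*pi*t)) \<in> measurable (restrict_space lborel {0..1}) borel"
    using measurable_cis_2pi by (intro measurable_restrict_space1) (simp add: measurable_lborel1)
  have "emeasure circle_measure A = emeasure (restrict_space lborel {0..1}) ((\<lambda>t. cis (2*pi*t)) -` A \<inter> {0..1})"
    unfolding circle_measure_def by (subst emeasure_distr[OF m assms]) (simp add: space_restrict_space)
  also have "\<dots> = emeasure lborel ((\<lambda>t. cis (2*pi*t)) -` A \<inter> {0..1})"
    by (rule emeasure_restrict_space) auto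
  also have "(\<lambda>t. cis (2*pi*t)) -` A \<inter> {0..1} = {t\<in>{0..1}. cis (2*pi*t) \<in> A}" by auto
  finally show ?thesis .
qed

lemma open_arc_eq:
  assumes ab: "a < b" "b \<le> a + 1"
  shows "(\<lambda>t. cis (2*pi*t)) ` {a<..<b} = (\<lambda>t. cis (2*pi*t)) ` {a..b} - {cis (2*pi*a), cis (2*pi*b)}"
proof
  show "(\<lambda>t. cis (2*pi*t)) ` {a<..<b} \<subseteq> (\<lambda>t. cis (2*pi*t)) ` {a..b} - {cis (2*pi*a), cis (2*pi*b)}"
  proof
    fix z assume "z \<in> (\<lambda>t. cis (2*pi*t)) ` {a<..<b}"
    then obtain t where t: "a < t" "t < b" "z = cis (2*pi*t)" by auto
    have "cis (2*pi*t) \<noteq> cis (2*pi*a)" "cis (2*pi*t) \<noteq> cis (2*pi*b)"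
      using cis_2pi_inj[of t a] cis_2pi_inj[of t b] t ab by auto
    thus "z \<in> (\<lambda>t. cis (2*pi*t)) ` {a..b} - {cis (2*pi*a), cis (2*pi*b)}" using t by auto
  qed
next
  show "(\<lambda>t. cis (2*pi*t)) ` {a..b} - {cis (2*pi*a), cis (2*pi*b)} \<subseteq> (\<lambda>t. cis (2*pi*t)) ` {a<..<b}"
  proof
    fix z assume z: "z \<in> (\<lambda>t. cis (2*pi*t)) ` {a..b} - {cis (2*pi*a), cis (2*pi*b)}"
    then obtain t where t: "a \<le> t" "t \<le> b" "z = cis (2*pi*t)" by auto
    hence "t \<noteq> a" "t \<noteq> b" using z by auto
    thus "z \<in> (\<lambda>t. cis (2*pi*t)) ` {a<..<b}" using t by auto
  qed
qed

lemma arc_in_sets: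
  assumes ab: "a < b" "b \<le> a + 1"
    and I: "(\<lambda>t. cis (2*pi*t)) ` {a<..<b} \<subseteq> I" "I \<subseteq> (\<lambda>t. cis (2*pi*t)) ` {a..b}"
  shows "I \<in> sets borel"
proof -
  have O: "(\<lambda>t. cis (2*pi*t)) ` {a<..<b} \<in> sets borel"
    unfolding open_arc_eq[OF ab] using closed_arc_image by (intro sets.Diff borel_closed) auto
  have "I = (\<lambda>t. cis (2*pi*t)) ` {a<..<b} \<union> (I \<inter> {cis (2*pi*a), cis (2*pi*b)})"
    using I open_arc_eq[OF ab] by blast
  also have "\<dots> \<in> sets borel" using O by (intro sets.Un) (auto intro!: borel_closed finite_imp_closed)
  finally show ?thesis .
qed

text \<open>Reduce a to [0, 1) modulo 1; the preimage of the arc in [0, 1] then lies in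
  [a, b] \<union> [a - 1, b - 1] \<union> {1}.\<close>

lemma emeasure_circle_closed_arc_le:
  assumes ab: "a < b" "b \<le> a + 1"
  shows "emeasure circle_measure ((\<lambda>t. cis (2*pi*t)) ` {a..b}) \<le> ennreal (b - a)"
proof -
  define a' where "a' = a - of_int \<lfloor>a\<rfloor>"
  define b' where "b' = b - of_int \<lfloor>a\<rfloor>"
  have a': "0 \<le> a'" "a' < 1" unfolding a'_def by linarith+
  have b': "a' < b'" "b' \<le> a' + 1" "b' - a' = b - a" using ab by (auto simp: a'_def b'_def)
  define P where "P = {t\<in>{0..1}. cis (2*pi*t) \<in> (\<lambda>t. cis (2*pi*t)) ` {a..b}}"
  have sub: "P \<subseteq> ({a'..b'} \<inter> {0..1}) \<union> ({a'-1..b'-1} \<inter> {0..1}) \<union> {1}"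
  proof
    fix t assume "t \<in> P"
    then obtain u where tu: "0 \<le> t" "t \<le> 1" "a \<le> u" "u \<le> b" "cis (2*pi*t) = cis (2*pi*u)" by (auto simp: P_def)
    obtain n :: int where n: "t = u + of_int n" using cis_2pi_eqE[OF tu(5)] by blast
    define m where "m = n + \<lfloor>a\<rfloor>"
    have tm: "t = (u - of_int \<lfloor>a\<rfloor>) + of_int m" using n by (simp add: m_def)
    have u: "a' \<le> u - of_int \<lfloor>a\<rfloor>" "u - of_int \<lfloor>a\<rfloor> \<le> b'" using tu by (auto simp: a'_def b'_def)
    hence "-2 < real_of_int m" "real_of_int m \<le> 1" using tm tu a' b' by linarith+
    hence "m = -1 \<or> m = 0 \<or> m = 1" by linarith
    moreover have "m = 1 \<Longrightarrow> t = 1" using tm tu u a' by simp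
    ultimately show "t \<in> ({a'..b'} \<inter> {0..1}) \<union> ({a'-1..b'-1} \<inter> {0..1}) \<union> {1}"
      using tm tu u by auto
  qed
  have "emeasure circle_measure ((\<lambda>t. cis (2*pi*t)) ` {a..b}) = emeasure lborel P"
    unfolding P_def using closed_arc_image by (intro emeasure_circle_measure borel_closed)
  also have "\<dots> \<le> emeasure lborel ({a'..b'} \<inter> {0..1} \<union> {a'-1..b'-1} \<inter> {0..1} \<union> {1})"
    by (rule emeasure_mono[OF sub]) auto
  also have "\<dots> \<le> emeasure lborel ({a'..b'} \<inter> {0..1}) + emeasure lborel ({a'-1..b'-1} \<inter> {0..1}) + emeasure lborel {1::real}"
    by (intro order_trans[OF emeasure_subadditive] add_right_mono) auto
  also have "\<dots> = ennreal (b - a)"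
  proof (cases "b' \<le> 1")
    case True
    have "{a'-1..b'-1} \<inter> {0..1} \<subseteq> {0}" using True by auto
    hence "emeasure lborel ({a'-1..b'-1} \<inter> {0..1}) = 0"
      by (metis emeasure_lborel_countable countable_finite finite.emptyI finite_insert countable_subset)
    moreover have "{a'..b'} \<inter> {0..1} = {a'..b'}" using True a' by auto
    ultimately show ?thesis using b' by simp
  next
    case False
    have "{a'..b'} \<inter> {0..1} = {a'..1}" "{a'-1..b'-1} \<inter> {0..1} = {0..b'-1}" using False b' a' by auto
    hence "emeasure lborel ({a'..b'} \<inter> {0..1}) + emeasure lborel ({a'-1..b'-1} \<inter> {0..1})
        = ennreal (1 - a') + ennreal (b' - 1)"
      using a' False by simp
    also have "\<dots> = ennreal (b - a)" using a' b' False by (subst ennreal_plus[symmetric]) auto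
    finally show ?thesis by simp
  qed
  finally show ?thesis .
qed

definition partition_arc :: "nat \<Rightarrow> nat \<Rightarrow> complex set" where
  "partition_arc n k = (\<lambda>t. cis (2*pi*t)) ` {real k / real n ..< real (k+1) / real n}"

lemma is_arc_partition_arc:
  assumes "0 < n"
  shows "is_arc (partition_arc n k)"
  unfolding is_arc_def partition_arc_def
  by (rule exI[of _ "real k / real n"], rule exI[of _ "real (k+1) / real n"])
     (use assms in \<open>auto simp: field_simps\<close>)

lemma partition_arc_in_sets:
  assumes "2 \<le> n"
  shows "partition_arc n k \<in> sets borel"
proof -
  let ?b = "real (k+1) / real n"
  have eq: "partition_arc n k = (\<lambda>t. cis (2*pi*t)) ` {real k / real n..?b} - {cis (2*pi*?b)}"
  proof
    have "cis (2*pi*t) \<noteq> cis (2*pi*?b)" if "t \<in> {real k / real n..<?b}" for t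
    proof
      have "?b - real k / real n < 1" using assms by (simp add: field_simps)
      moreover assume "cis (2*pi*t) = cis (2*pi*?b)"
      ultimately show False using cis_2pi_inj[of t ?b] that by auto
    qed
    thus "partition_arc n k \<subseteq> (\<lambda>t. cis (2*pi*t)) ` {real k / real n..?b} - {cis (2*pi*?b)}"
      by (auto simp: partition_arc_def)
  qed (force simp: partition_arc_def less_eq_real_def)
  show ?thesis unfolding eq by (rule sets.Diff) (auto intro!: borel_closed closed_arc_image)
qed

lemma emeasure_circle_partition_arc:
  assumes n: "2 \<le> n" and k: "k < n"
  shows "emeasure circle_measure (partition_arc n k) \<ge> ennreal (1 / real n)"
proof -
  let ?a = "real k / real n" and ?b = "real (k+1) / real n"
  have "?b \<le> 1" "?a < ?b" "?b - ?a = 1 / real n" using n k by (auto simp: field_simps)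
  hence "{?a..<?b} \<subseteq> {0..1}" by (subst atLeastLessThan_subseteq_atLeastAtMost_iff) simp
  hence "{?a..<?b} \<subseteq> {t\<in>{0..1}. cis (2*pi*t) \<in> partition_arc n k}"
    by (auto simp: partition_arc_def)
  hence "emeasure lborel {?a..<?b} \<le> emeasure lborel {t\<in>{0..1}. cis (2*pi*t) \<in> partition_arc n k}"
    by (rule emeasure_mono) (use cis_2pi_preimage_in_sets[OF partition_arc_in_sets[OF n]] in simp)
  with \<open>?a < ?b\<close> \<open>?b - ?a = 1 / real n\<close> show ?thesis
    using emeasure_circle_measure[OF partition_arc_in_sets[OF n]] by simp
qed

lemma partition_arc_disjoint:
  assumes "j < n" "k < n" "z \<in> partition_arc n j" "z \<in> partition_arc n k"
  shows "j = k"
proof -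
  have n: "real n > 0" using assms by simp
  have idx: "nat \<lfloor>t * real n\<rfloor> = i \<and> t \<in> {0..<1}" if "i < n" "t \<in> {real i / real n ..< real (i+1) / real n}" for i t
  proof -
    have ti: "real i \<le> t * real n" "t * real n < real i + 1" using that n by (auto simp: field_simps)
    hence "\<lfloor>t * real n\<rfloor> = int i" by (simp add: floor_eq_iff)
    moreover have "0 \<le> t * real n" "t * real n < 1 * real n" using ti that(1) by linarith+
    ultimately show ?thesis using n by (simp add: zero_le_mult_iff mult_less_cancel_right)
  qed
  obtain u t where "u \<in> {real j / real n ..< real (j+1) / real n}" "t \<in> {real k / real n ..< real (k+1) / real n}"
      "cis (2*pi*u) = cis (2*pi*t)"
    using assms(3,4) by (auto simp: partition_arc_def)
  with idx[OF assms(1)] idx[OF assms(2)] cis_2pi_inj[of u t] show ?thesis by fastforce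
qed

lemma integral_le_Riemann_sum:
  fixes \<psi> :: "real \<Rightarrow> real"
  assumes cont: "continuous_on {0..1} \<psi>" and n: "0 < n"
    and bnd: "\<And>k t. k < n \<Longrightarrow> t \<in> {real k / real n .. real (k+1) / real n} \<Longrightarrow> \<psi> t \<le> u k"
  shows "integral {0..1} \<psi> \<le> (\<Sum>k<n. u k / real n)"
proof -
  have npos: "real n > 0" using n by simp
  have int: "\<psi> integrable_on {a..b}" if "0 \<le> a" "b \<le> 1" for a b
    by (rule integrable_continuous_interval, rule continuous_on_subset[OF cont]) (use that in auto)
  have "integral {0..real j / real n} \<psi> \<le> (\<Sum>k<j. u k / real n)" if "j \<le> n" for j
    using that
  proof (induction j)
    case (Suc j)
    have le: "real (Suc j) / real n \<le> 1" "real j / real n \<le> real (Suc j) / real n"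
      using Suc.prems npos by (simp_all add: field_simps)
    have "integral {0..real (Suc j) / real n} \<psi>
        = integral {0..real j / real n} \<psi> + integral {real j / real n..real (Suc j) / real n} \<psi>"
      by (rule Henstock_Kurzweil_Integration.integral_combine[symmetric]) (use le int in auto)
    also have "integral {real j / real n..real (Suc j) / real n} \<psi> \<le> integral {real j / real n..real (Suc j) / real n} (\<lambda>_. u j)"
      by (rule integral_le) (use int le bnd[of j] Suc.prems in auto)
    also have "\<dots> = u j / real n" using npos le by (simp add: field_simps)
    finally show ?case using Suc by simp
  qed simp
  from this[of n] show ?thesis using npos by simp
qed

lemma partition_sum_le_nn_integral:
  fixes \<mu> :: "complex measure" and g :: "complex \<Rightarrow> real"
  assumes sets: "sets \<mu> = sets borel" and C: "0 < C"
    and arcs: "\<And>I. is_arc I \<Longrightarrow> emeasure \<mu> I \<ge> ennreal C * emeasure circle_measure I"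
    and n: "2 \<le> n" and b: "\<And>k. 0 \<le> b k" "\<And>k z. k < n \<Longrightarrow> z \<in> partition_arc n k \<Longrightarrow> b k \<le> g z"
  shows "ennreal (\<Sum>k<n. b k * C / real n) \<le> (\<integral>\<^sup>+ z\<in>cball 0 1. ennreal (g z) \<partial>\<mu>)"
proof -
  have arc_sets: "partition_arc n k \<in> sets \<mu>" for k using partition_arc_in_sets[OF n] sets by simp
  have pointwise: "(\<Sum>k<n. ennreal (b k) * indicator (partition_arc n k) z) \<le> ennreal (g z) * indicator (cball 0 1) z" for z
  proof (cases "\<exists>j<n. z \<in> partition_arc n j")
    case False
    hence "(\<Sum>k<n. ennreal (b k) * indicator (partition_arc n k) z) = 0" by (intro sum.neutral) auto
    thus ?thesis by simp
  next
    case True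
    then obtain j where j: "j < n" "z \<in> partition_arc n j" by auto
    have "(\<Sum>k<n. ennreal (b k) * indicator (partition_arc n k) z) = ennreal (b j) * indicator (partition_arc n j) z
        + (\<Sum>k\<in>{..<n}-{j}. ennreal (b k) * indicator (partition_arc n k) z)"
      by (rule sum.remove) (use j in auto)
    also have "(\<Sum>k\<in>{..<n}-{j}. ennreal (b k) * indicator (partition_arc n k) z) = 0"
      using partition_arc_disjoint[OF j(1) _ j(2)] by (intro sum.neutral) (auto simp: indicator_def)
    finally have "(\<Sum>k<n. ennreal (b k) * indicator (partition_arc n k) z) = ennreal (b j)" using j by simp
    moreover have "z \<in> cball 0 1" using j(2) by (auto simp: partition_arc_def)
    ultimately show ?thesis using b(2)[OF j] by (simp add: ennreal_leI)
  qed
  have "ennreal (\<Sum>k<n. b k * C / real n) = (\<Sum>k<n. ennreal (b k) * (ennreal C * ennreal (1 / real n)))"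
  proof -
    have "ennreal (b k) * (ennreal C * ennreal (1 / real n)) = ennreal (b k * C / real n)" for k
      using C b(1) by (simp add: ennreal_mult[symmetric])
    moreover have "ennreal (\<Sum>k<n. b k * C / real n) = (\<Sum>k<n. ennreal (b k * C / real n))"
      using C b(1) by (intro sum_ennreal[symmetric]) auto
    ultimately show ?thesis by simp
  qed
  also have "\<dots> \<le> (\<Sum>k<n. ennreal (b k) * emeasure \<mu> (partition_arc n k))"
  proof (rule sum_mono)
    fix k assume "k \<in> {..<n}"
    hence "ennreal C * ennreal (1 / real n) \<le> ennreal C * emeasure circle_measure (partition_arc n k)"
      using emeasure_circle_partition_arc[OF n] by (intro mult_left_mono) auto
    also have "\<dots> \<le> emeasure \<mu> (partition_arc n k)" using arcs is_arc_partition_arc n by simp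
    finally show "ennreal (b k) * (ennreal C * ennreal (1 / real n)) \<le> ennreal (b k) * emeasure \<mu> (partition_arc n k)"
      by (rule mult_left_mono) simp
  qed
  also have "\<dots> = (\<integral>\<^sup>+ z. (\<Sum>k<n. ennreal (b k) * indicator (partition_arc n k) z) \<partial>\<mu>)"
    by (subst nn_integral_sum)
       (auto simp: nn_integral_cmult_indicator arc_sets intro!: borel_measurable_times_ennreal borel_measurable_indicator)
  also have "\<dots> \<le> (\<integral>\<^sup>+ z\<in>cball 0 1. ennreal (g z) \<partial>\<mu>)"
    by (rule nn_integral_mono) (use pointwise in auto)
  finally show ?thesis .
qed

lemma uniform_partition_oscillation:
  fixes \<psi> :: "real \<Rightarrow> real"
  assumes "continuous_on {0..1} \<psi>" "0 < \<epsilon>"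
  obtains n where "2 \<le> n"
    "\<And>k t. k < n \<Longrightarrow> t \<in> {real k / real n .. real (k+1) / real n} \<Longrightarrow> \<bar>\<psi> t - \<psi> (real k / real n)\<bar> < \<epsilon>"
proof -
  have "uniformly_continuous_on {0..1} \<psi>" by (rule compact_uniformly_continuous[OF assms(1)]) auto
  then obtain d where d: "d > 0" "\<And>x x'. x \<in> {0..1} \<Longrightarrow> x' \<in> {0..1} \<Longrightarrow> dist x' x < d \<Longrightarrow> dist (\<psi> x') (\<psi> x) < \<epsilon>"
    using assms(2) unfolding uniformly_continuous_on_def by metis
  define n where "n = max 2 (nat \<lceil>1 / d\<rceil> + 1)"
  have npos: "real n > 0" by (simp add: n_def)
  have nd: "1 / real n < d"
  proof -
    have "1 / d < real n" unfolding n_def by linarith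
    thus ?thesis using d npos by (simp add: field_simps)
  qed
  have "\<bar>\<psi> t - \<psi> (real k / real n)\<bar> < \<epsilon>" if "k < n" "t \<in> {real k / real n .. real (k+1) / real n}" for k t
  proof -
    have "real (k+1) / real n \<le> 1" "real (k+1) / real n - real k / real n = 1 / real n"
      "0 \<le> real k / real n" using that npos by (simp_all add: field_simps)
    moreover have "real k / real n \<le> t" "t \<le> real (k+1) / real n" using that(2) by auto
    ultimately have "real k / real n \<in> {0..1}" "t \<in> {0..1}" "dist t (real k / real n) < d"
      using nd unfolding atLeastAtMost_iff dist_real_def by linarith+
    from d(2)[OF this] show ?thesis by (simp add: dist_real_def)
  qed
  thus ?thesis using that[of n] by (simp add: n_def)
qed

text \<open>Riemann sums of g on the circle against the partition into n equal arcs, with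
  heights lowered by \<epsilon> so that they stay below g on each arc.\<close>

lemma arc_bound_imp_circle_integral_le:
  fixes \<mu> :: "complex measure" and g :: "complex \<Rightarrow> real"
  assumes sets: "sets \<mu> = sets borel" and C: "0 < C"
    and arcs: "\<And>I. is_arc I \<Longrightarrow> emeasure \<mu> I \<ge> ennreal C * emeasure circle_measure I"
    and cont: "continuous_on (cball 0 1) g" and nonneg: "\<And>z. 0 \<le> g z"
  shows "ennreal (C * integral {0..1} (\<lambda>t. g (cis (2*pi*t)))) \<le> (\<integral>\<^sup>+ z\<in>cball 0 1. ennreal (g z) \<partial>\<mu>)"
proof (rule ennreal_le_epsilon)
  fix e :: real assume e: "0 < e"
  define \<psi> where "\<psi> = (\<lambda>t. g (cis (2*pi*t)))"
  have c\<psi>: "continuous_on UNIV \<psi>" using continuous_on_circle_param[OF cont, of 1] by (simp add: \<psi>_def)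
  define \<epsilon> where "\<epsilon> = e / (2 * C)"
  have \<epsilon>: "0 < \<epsilon>" using e C by (simp add: \<epsilon>_def)
  obtain n where n2: "2 \<le> n" and near:
      "\<And>k t. k < n \<Longrightarrow> t \<in> {real k / real n .. real (k+1) / real n} \<Longrightarrow> \<bar>\<psi> t - \<psi> (real k / real n)\<bar> < \<epsilon>"
    using uniform_partition_oscillation[OF continuous_on_subset[OF c\<psi>] \<epsilon>] by auto
  have npos: "real n > 0" using n2 by simp
  define b where "b = (\<lambda>k. max (\<psi> (real k / real n) - \<epsilon>) 0)"
  have L: "ennreal (\<Sum>k<n. b k * C / real n) \<le> (\<integral>\<^sup>+ z\<in>cball 0 1. ennreal (g z) \<partial>\<mu>)"
  proof (rule partition_sum_le_nn_integral[OF sets C arcs n2])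
    show "0 \<le> b k" for k by (simp add: b_def)
    fix k z assume "k < n" "z \<in> partition_arc n k"
    then obtain t where "t \<in> {real k / real n ..< real (k+1) / real n}" "z = cis (2*pi*t)"
      by (auto simp: partition_arc_def)
    with near[OF \<open>k < n\<close>, of t] show "b k \<le> g z" using nonneg by (auto simp: b_def \<psi>_def)
  qed
  have "integral {0..1} \<psi> \<le> (\<Sum>k<n. (\<psi> (real k / real n) + \<epsilon>) / real n)"
  proof (rule integral_le_Riemann_sum[OF continuous_on_subset[OF c\<psi>]])
    fix k t assume "k < n" "t \<in> {real k / real n..real (k + 1) / real n}"
    from near[OF this] show "\<psi> t \<le> \<psi> (real k / real n) + \<epsilon>" by linarith
  qed (use npos in auto)
  hence "C * integral {0..1} \<psi> \<le> (\<Sum>k<n. b k * C / real n) + e"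
  proof -
    assume "integral {0..1} \<psi> \<le> (\<Sum>k<n. (\<psi> (real k / real n) + \<epsilon>) / real n)"
    also have "\<dots> \<le> (\<Sum>k<n. (b k + 2 * \<epsilon>) / real n)"
      by (intro sum_mono divide_right_mono) (auto simp: b_def)
    also have "\<dots> = (\<Sum>k<n. b k / real n) + 2 * \<epsilon>"
      using npos by (simp add: add_divide_distrib sum.distrib)
    finally have "C * integral {0..1} \<psi> \<le> C * ((\<Sum>k<n. b k / real n) + 2 * \<epsilon>)"
      using C by (intro mult_left_mono) auto
    also have "\<dots> = (\<Sum>k<n. b k * C / real n) + e"
      using C by (simp add: \<epsilon>_def distrib_left sum_distrib_left mult_ac)
    finally show ?thesis .
  qed
  hence "ennreal (C * integral {0..1} \<psi>) \<le> ennreal ((\<Sum>k<n. b k * C / real n) + e)"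
    by (rule ennreal_leI)
  also have "\<dots> = ennreal (\<Sum>k<n. b k * C / real n) + ennreal e"
    using C e by (intro ennreal_plus) (auto intro!: sum_nonneg simp: b_def)
  finally show "ennreal (C * integral {0..1} (\<lambda>t. g (cis (2*pi*t)))) \<le> (\<integral>\<^sup>+ z\<in>cball 0 1. ennreal (g z) \<partial>\<mu>) + ennreal e"
    unfolding \<psi>_def using L by (meson add_right_mono order_trans)
qed

section \<open>Reproducing kernels\<close>

lemma hardy_pow_divide_const:
  assumes cF: "continuous_on (cball 0 1) F" and c: "0 < c" and p: "0 < p"
  shows "hardy_pow p (\<lambda>z. F z / of_real c) = hardy_pow p F * ennreal (1 / c powr p)"
  unfolding hardy_pow_def SUP_mult_right_ennreal
proof (rule SUP_cong[OF refl])
  fix r :: real assume r: "r \<in> {0<..<1}"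
  have cF': "continuous_on (cball 0 1) (\<lambda>z. F z / of_real c)" by (intro continuous_intros cF) (use c in auto)
  have "circle_mean p (\<lambda>z. F z / of_real c) r = circle_mean p F r * (1 / c powr p)"
    unfolding circle_mean_def using c by (simp add: norm_divide powr_divide)
  thus "(\<integral>\<^sup>+ t\<in>{0..1::real}. ennreal (cmod (F (of_real r * cis (2*pi*t)) / of_real c) powr p) \<partial>lborel)
     = (\<integral>\<^sup>+ t\<in>{0..1::real}. ennreal (cmod (F (of_real r * cis (2*pi*t))) powr p) \<partial>lborel) * ennreal (1 / c powr p)"
    using nn_integral_circle_eq_circle_mean[OF cF', of r p] nn_integral_circle_eq_circle_mean[OF cF, of r p] r p
    by (simp add: ennreal_mult''[symmetric] del: times_divide_eq_right)
qed

lemma kernel_denominator_bounds: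
  assumes "a \<in> ball 0 1" "cmod w \<le> 1"
  shows "1 - cnj a * w \<noteq> 0" "1 - cmod a \<le> cmod (1 - cnj a * w)"
proof -
  have "cmod (cnj a * w) \<le> cmod a" using assms by (simp add: norm_mult mult_left_le)
  moreover have "1 - cmod (cnj a * w) \<le> cmod (1 - cnj a * w)"
    using norm_triangle_ineq2[of 1 "cnj a * w"] by simp
  ultimately show "1 - cmod a \<le> cmod (1 - cnj a * w)" by linarith
  thus "1 - cnj a * w \<noteq> 0" using assms by auto
qed

lemma holomorphic_on_kernel_power:
  assumes "a \<in> ball 0 1"
  shows "(\<lambda>w. kernel a w ^ l) holomorphic_on cball 0 1"
  unfolding kernel_def using kernel_denominator_bounds(1)[OF assms] by (intro holomorphic_intros) auto

lemma continuous_on_kernel_power: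
  assumes "a \<in> ball 0 1"
  shows "continuous_on (cball 0 1) (\<lambda>w. kernel a w ^ l)"
  using holomorphic_on_kernel_power[OF assms] by (rule holomorphic_on_imp_continuous_on)

lemma hardy_pow_kernel_power_bounds:
  assumes a: "a \<in> ball 0 1" and p: "0 < p"
  shows "0 < hardy_pow p (\<lambda>w. kernel a w ^ l)" "hardy_pow p (\<lambda>w. kernel a w ^ l) < \<infinity>"
proof -
  note cont = continuous_on_kernel_power[OF a, of l]
  have "(\<lambda>w. kernel a w ^ l) holomorphic_on ball 0 1"
    using holomorphic_on_kernel_power[OF a] by (rule holomorphic_on_subset) auto
  from hardy_pow_le_circle_mean[OF cont this p]
  show "hardy_pow p (\<lambda>w. kernel a w ^ l) < \<infinity>" by (rule le_less_trans) simp
  define c0 where "c0 = ((1/2)^l) powr p"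
  have "ennreal c0 = (\<integral>\<^sup>+ t\<in>{0..1::real}. ennreal c0 \<partial>lborel)"
    by (simp add: nn_integral_cmult_indicator)
  also have "\<dots> \<le> (\<integral>\<^sup>+ t\<in>{0..1::real}. ennreal (cmod (kernel a (of_real (1/2) * cis (2*pi*t)) ^ l) powr p) \<partial>lborel)"
  proof (intro nn_integral_mono mult_right_mono ennreal_leI)
    fix t :: real
    let ?w = "of_real (1/2) * cis (2*pi*t) :: complex"
    have "cmod (1 - cnj a * ?w) \<le> 1 + cmod (cnj a * ?w)" using norm_triangle_ineq4[of 1 "cnj a * ?w"] by simp
    moreover have "cmod (cnj a * ?w) \<le> 1" using a by (simp add: norm_mult)
    ultimately have "1/2 \<le> cmod (kernel a ?w)"
      using kernel_denominator_bounds(1)[OF a, of ?w] by (simp add: kernel_def norm_mult norm_divide field_simps)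
    hence "(1/2)^l \<le> cmod (kernel a ?w ^ l)" by (simp add: norm_power power_mono)
    thus "c0 \<le> cmod (kernel a ?w ^ l) powr p" unfolding c0_def using p by (intro powr_mono2) auto
  qed simp
  also have "\<dots> \<le> hardy_pow p (\<lambda>w. kernel a w ^ l)"
    unfolding hardy_pow_def by (rule SUP_upper) auto
  finally show "0 < hardy_pow p (\<lambda>w. kernel a w ^ l)"
    by (rule order_less_le_trans[rotated]) (simp add: c0_def)
qed

lemma norm_kernel_properties:
  assumes a: "a \<in> ball 0 1" and p: "0 < p"
  shows "hardy_pow p (norm_kernel p l a) = 1" "continuous_on (cball 0 1) (norm_kernel p l a)"
    "norm_kernel p l a holomorphic_on ball 0 1"
proof -
  define E where "E = hardy_pow p (\<lambda>w. kernel a w ^ l)"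
  have E: "0 < E" "E < \<infinity>" using hardy_pow_kernel_power_bounds[OF a p] by (auto simp: E_def)
  define N where "N = hardy_norm p (\<lambda>w. kernel a w ^ l)"
  have eE: "0 < enn2real E" using E by (simp add: enn2real_positive_iff)
  have N: "N = enn2real E powr (1/p)" by (simp add: N_def hardy_norm_def E_def)
  have Npos: "0 < N" using eE by (simp add: N)
  have Np: "N powr p = enn2real E" using eE p by (simp add: N powr_powr)
  have nk: "norm_kernel p l a = (\<lambda>z. kernel a z ^ l / of_real N)"
    by (simp add: fun_eq_iff norm_kernel_def N_def)
  note cont = continuous_on_kernel_power[OF a, of l]
  have "hardy_pow p (norm_kernel p l a) = ennreal (enn2real E) * ennreal (1 / enn2real E)"
    unfolding nk hardy_pow_divide_const[OF cont Npos p] Np E_def[symmetric] using E by (simp add: ennreal_enn2real_if)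
  also have "\<dots> = 1" using eE by (simp flip: ennreal_mult)
  finally show "hardy_pow p (norm_kernel p l a) = 1" .
  show "continuous_on (cball 0 1) (norm_kernel p l a)" unfolding nk by (intro continuous_intros cont) (use Npos in auto)
  have "(\<lambda>w. kernel a w ^ l) holomorphic_on ball 0 1"
    using holomorphic_on_kernel_power[OF a] by (rule holomorphic_on_subset) auto
  thus "norm_kernel p l a holomorphic_on ball 0 1" unfolding nk using Npos by (intro holomorphic_on_divide) auto
qed

lemma integral_periodic_shift:
  fixes G :: "real \<Rightarrow> real"
  assumes cont: "continuous_on UNIV G" and per: "\<And>x. G (x + 1) = G x"
  shows "integral {c..c+1} G = integral {0..1} G"
proof -
  interpret periodic_fun_simple' G by standard (rule per)
  have int: "G integrable_on {a..b}" for a b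
    by (rule integrable_continuous_interval[OF continuous_on_subset[OF cont]]) auto
  define c' where "c' = c - of_int \<lfloor>c\<rfloor>"
  have c': "0 \<le> c'" "c' < 1" unfolding c'_def by linarith+
  have "integral {c..c+1} G = integral {c - of_int \<lfloor>c\<rfloor>..c + 1 - of_int \<lfloor>c\<rfloor>} (\<lambda>x. G (x + of_int \<lfloor>c\<rfloor>))"
    by (rule integral_shift_real_ivl[symmetric])
  also have "\<dots> = integral {c'..1} G + integral {1..c'+1} G"
    using c' int by (simp add: plus_of_int c'_def algebra_simps Henstock_Kurzweil_Integration.integral_combine)
  also have "integral {1..c'+1} G = integral {0..c'} (\<lambda>x. G (x + 1))"
    using integral_shift_real_ivl[where f=G and a=1 and b="c' + 1" and c=1] by simp
  also have "integral {c'..1} G + integral {0..c'} (\<lambda>x. G (x + 1)) = integral {0..1} G"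
    using Henstock_Kurzweil_Integration.integral_combine[of 0 c' 1 G] c' int by (simp add: per)
  finally show ?thesis .
qed

lemma integral_periodic_le:
  fixes G :: "real \<Rightarrow> real"
  assumes cont: "continuous_on UNIV G" and per: "\<And>x. G (x + 1) = G x" and nonneg: "\<And>x. 0 \<le> G x"
    and ab: "a \<le> b" "b \<le> a + 1"
  shows "integral {a..b} G \<le> integral {0..1} G"
proof -
  have "integral {a..b} G \<le> integral {a..a+1} G"
    using ab nonneg by (intro integral_subset_le integrable_continuous_interval continuous_on_subset[OF cont]) auto
  also have "\<dots> = integral {0..1} G" by (rule integral_periodic_shift[OF cont per])
  finally show ?thesis .
qed

lemma cis_2pi_plus_1: "cis (2*pi*(x+1)) = cis (2*pi*x)"
  by (simp add: distrib_left cis_mult[symmetric])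

lemma kernel_rotate: "kernel (of_real \<rho> * cis (2*pi*\<theta>)) z = kernel (of_real \<rho>) (z * cis (-(2*pi*\<theta>)))"
  by (simp add: kernel_def cis_cnj mult_ac)

definition radial_kernel_hardy_pow :: "real \<Rightarrow> nat \<Rightarrow> real \<Rightarrow> ennreal" where
  "radial_kernel_hardy_pow p l \<rho> = hardy_pow p (\<lambda>w. kernel (of_real \<rho>) w ^ l)"

lemma hardy_pow_kernel_rotate:
  assumes \<rho>: "0 \<le> \<rho>" "\<rho> < 1" and p: "0 < p"
  shows "hardy_pow p (\<lambda>w. kernel (of_real \<rho> * cis (2*pi*\<theta>)) w ^ l) = radial_kernel_hardy_pow p l \<rho>"
  unfolding radial_kernel_hardy_pow_def hardy_pow_def
proof (rule SUP_cong[OF refl])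
  fix r :: real assume r: "r \<in> {0<..<1}"
  have a: "of_real \<rho> * cis (2*pi*\<theta>) \<in> ball 0 1" "(of_real \<rho> :: complex) \<in> ball 0 1"
    using \<rho> by (simp_all add: norm_mult)
  define G where "G = (\<lambda>u. cmod (kernel (of_real \<rho>) (of_real r * cis (2*pi*u)) ^ l) powr p)"
  have cG: "continuous_on UNIV G" unfolding G_def
    using continuous_on_circle_param[OF continuous_on_kernel_power[OF a(2)]] r p
    by (intro continuous_on_norm_powr) auto
  have eq: "cmod (kernel (of_real \<rho> * cis (2*pi*\<theta>)) (of_real r * cis (2*pi*t)) ^ l) powr p = G (t + - \<theta>)" for t
  proof -
    have "of_real r * cis (2*pi*t) * cis (-(2*pi*\<theta>)) = of_real r * cis (2*pi*(t + -\<theta>))"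
      by (simp add: mult.assoc cis_mult right_diff_distrib)
    thus ?thesis by (simp only: G_def kernel_rotate)
  qed
  have "circle_mean p (\<lambda>w. kernel (of_real \<rho> * cis (2*pi*\<theta>)) w ^ l) r = integral {-\<theta>..-\<theta>+1} G"
    unfolding circle_mean_def eq
    using integral_shift_real_ivl[where a="-\<theta>" and b="1 - \<theta>" and c="-\<theta>" and f=G] by (simp add: algebra_simps)
  also have "\<dots> = circle_mean p (\<lambda>w. kernel (of_real \<rho>) w ^ l) r"
    unfolding circle_mean_def G_def[symmetric] by (rule integral_periodic_shift[OF cG]) (simp add: G_def cis_2pi_plus_1)
  finally show "(\<integral>\<^sup>+ t\<in>{0..1::real}. ennreal (cmod (kernel (of_real \<rho> * cis (2*pi*\<theta>)) (of_real r * cis (2*pi*t)) ^ l) powr p) \<partial>lborel)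
      = (\<integral>\<^sup>+ t\<in>{0..1::real}. ennreal (cmod (kernel (of_real \<rho>) (of_real r * cis (2*pi*t)) ^ l) powr p) \<partial>lborel)"
    using nn_integral_circle_eq_circle_mean[OF continuous_on_kernel_power[OF a(1)], of r p]
      nn_integral_circle_eq_circle_mean[OF continuous_on_kernel_power[OF a(2)], of r p] r p by simp
qed

lemma radial_kernel_hardy_pow_real:
  assumes "0 \<le> \<rho>" "\<rho> < 1" "0 < p"
  shows "0 < enn2real (radial_kernel_hardy_pow p l \<rho>)"
    "radial_kernel_hardy_pow p l \<rho> = ennreal (enn2real (radial_kernel_hardy_pow p l \<rho>))"
  using hardy_pow_kernel_power_bounds[of "of_real \<rho>" p l] assms
  by (auto simp: radial_kernel_hardy_pow_def enn2real_positive_iff less_top[symmetric])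

lemma norm_kernel_power_powr:
  assumes "1 - cnj a * z \<noteq> 0"
  shows "cmod (kernel a z ^ l) powr p = cmod (1 - cnj a * z) powr (-(p * real l))"
proof -
  define D where "D = cmod (1 - cnj a * z)"
  have D: "0 < D" using assms by (simp add: D_def)
  have "cmod (kernel a z ^ l) = (1 / D) powr real l"
    using D by (simp add: kernel_def D_def norm_power norm_divide powr_realpow)
  hence "cmod (kernel a z ^ l) powr p = (1 / D) powr (real l * p)" by (simp add: powr_powr)
  also have "\<dots> = D powr (-(p * real l))" using D by (simp add: powr_divide powr_minus_divide mult.commute)
  finally show ?thesis by (simp add: D_def)
qed

lemma circle_mean_le_hardy_pow:
  assumes "continuous_on (cball 0 1) F" "0 < r" "r < 1" "0 < p"
  shows "ennreal (circle_mean p F r) \<le> hardy_pow p F"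
proof -
  have "ennreal (circle_mean p F r)
      = (\<integral>\<^sup>+ t\<in>{0..1::real}. ennreal (cmod (F (of_real r * cis (2*pi*t))) powr p) \<partial>lborel)"
    using nn_integral_circle_eq_circle_mean[OF assms(1) _ _ assms(4), of r] assms by simp
  also have "\<dots> \<le> hardy_pow p F" unfolding hardy_pow_def using assms by (intro SUP_upper) auto
  finally show ?thesis .
qed

lemma boundary_circle_mean_le_hardy_pow:
  assumes cF: "continuous_on (cball 0 1) F" and p: "0 < p"
  shows "ennreal (circle_mean p F 1) \<le> hardy_pow p F"
proof -
  have "continuous_on ({0..1} \<times> cbox 0 1) (\<lambda>(x,t). cmod (F (of_real x * cis (2*pi*t))) powr p)"
    unfolding case_prod_unfold
    by (intro continuous_on_norm_powr[OF _ p] continuous_on_compose2[OF cF])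
       (auto intro!: continuous_intros simp: norm_mult)
  from integral_continuous_on_param[OF this]
  have cM: "continuous_on {0..1} (circle_mean p F)" by (simp add: circle_mean_def cbox_interval)
  have "(circle_mean p F \<longlongrightarrow> circle_mean p F 1) (at 1 within {0..1})"
    using cM by (simp add: continuous_on_def)
  hence "(circle_mean p F \<longlongrightarrow> circle_mean p F 1) (at_left 1)"
    by (simp add: at_within_Icc_at_left)
  moreover have "\<forall>\<^sub>F x in at_left 1. ennreal (circle_mean p F x) \<le> hardy_pow p F"
  proof (rule eventually_mono[OF eventually_at_left_real[of "1/2" "1::real"]])
    show "ennreal (circle_mean p F x) \<le> hardy_pow p F" if "x \<in> {1/2<..<1}" for x
      using that by (intro circle_mean_le_hardy_pow[OF cF _ _ p]) auto
  qed simp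
  ultimately show ?thesis
    by (intro tendsto_le[OF _ tendsto_const tendsto_ennrealI]) auto
qed

lemma holomorphic_on_radial_kernel_power:
  assumes \<rho>: "0 \<le> \<rho>" "\<rho> < 1"
  shows "(\<lambda>w. kernel (of_real \<rho>) w ^ l) holomorphic_on ball 0 (2 / (1 + \<rho>))"
    and "\<And>w. w \<in> ball 0 (2 / (1 + \<rho>)) \<Longrightarrow> kernel (of_real \<rho>) w ^ l \<noteq> 0"
proof -
  have nz: "1 - cnj (of_real \<rho>) * w \<noteq> 0" if "w \<in> ball 0 (2 / (1 + \<rho>))" for w
  proof -
    have "cmod w * (1 + \<rho>) < 2" using that \<rho> by (simp add: field_simps)
    moreover have "\<rho> * cmod w \<le> cmod w" using \<rho> by (simp add: mult_left_le_one_le)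
    ultimately have "cmod (cnj (of_real \<rho>) * w) < 1" using \<rho> by (simp add: norm_mult algebra_simps)
    thus ?thesis by (metis norm_one order_less_irrefl eq_iff_diff_eq_0)
  qed
  show "(\<lambda>w. kernel (of_real \<rho>) w ^ l) holomorphic_on ball 0 (2 / (1 + \<rho>))"
    unfolding kernel_def using nz by (intro holomorphic_intros) auto
  show "\<And>w. w \<in> ball 0 (2 / (1 + \<rho>)) \<Longrightarrow> kernel (of_real \<rho>) w ^ l \<noteq> 0"
    using nz by (simp add: kernel_def)
qed

lemma circle_mean_radial_kernel_mono:
  assumes \<rho>: "0 \<le> \<rho>" "\<rho> < 1" and x: "0 \<le> x" "x \<le> 1" and p: "0 < p"
  shows "circle_mean p (\<lambda>w. kernel (of_real \<rho>) w ^ l) x \<le> circle_mean p (\<lambda>w. kernel (of_real \<rho>) w ^ l) 1"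
proof (cases "x = 1")
  case False
  have "1 < 2 / (1 + \<rho>)" using \<rho> by (simp add: field_simps)
  with False x show ?thesis
    by (intro circle_mean_mono_nonzero[OF holomorphic_on_radial_kernel_power(1,2)[OF \<rho>] _ _ _ p]) auto
qed simp

lemma norm_one_minus_cis_le: "cmod (1 - cis \<theta>) \<le> \<bar>\<theta>\<bar>"
proof -
  have "(cmod (1 - cis \<theta>))^2 = (1 - cos \<theta>)^2 + (sin \<theta>)^2" by (simp add: cmod_power2)
  also have "\<dots> = 2 - 2 * cos \<theta>" using sin_cos_squared_add[of \<theta>] by (simp add: power2_eq_square algebra_simps)
  also have "\<dots> = 4 * (sin (\<theta>/2))^2" using cos_double_sin[of "\<theta>/2"] by simp
  also have "\<dots> = (2 * sin (\<theta>/2))^2" by (simp add: power2_eq_square)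
  also have "\<dots> \<le> \<theta>^2"
  proof -
    have "\<bar>2 * sin (\<theta>/2)\<bar> \<le> \<bar>\<theta>\<bar>" using abs_sin_x_le_abs_x[of "\<theta>/2"] by simp
    thus ?thesis by (metis power2_abs power_mono abs_ge_zero)
  qed
  finally show ?thesis by (metis abs_ge_zero power2_abs power2_le_imp_le)
qed

lemma norm_one_minus_scaled_cis_le:
  assumes "0 \<le> x" "x \<le> 1" "0 \<le> t"
  shows "cmod (1 - of_real x * cis (2*pi*t)) \<le> (1 - x) + 2*pi*t"
proof -
  have "1 - of_real x * cis (2*pi*t) = of_real (1 - x) + of_real x * (1 - cis (2*pi*t))" by (simp add: algebra_simps)
  hence "cmod (1 - of_real x * cis (2*pi*t)) \<le> cmod (of_real (1 - x) :: complex) + cmod (of_real x * (1 - cis (2*pi*t)))"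
    by (metis norm_triangle_ineq)
  also have "\<dots> = (1 - x) + x * cmod (1 - cis (2*pi*t))"
    using assms by (simp only: norm_mult norm_of_real abs_of_nonneg diff_ge_0_iff_ge)
  also have "x * cmod (1 - cis (2*pi*t)) \<le> 1 * \<bar>2*pi*t\<bar>"
    using assms norm_one_minus_cis_le[of "2*pi*t"] by (intro mult_mono) auto
  finally show ?thesis using assms by simp
qed

lemma integral_norm_one_minus_cis_powr_ge:
  assumes y: "0 < y" "y \<le> 1" and s: "0 \<le> s"
  shows "(1 + 2*pi) powr (-s) * y powr (1 - s)
       \<le> integral {0..1} (\<lambda>t. cmod (1 - of_real (1 - y) * cis (2*pi*t)) powr (-s))"
proof -
  have pos: "0 < cmod (1 - of_real (1 - y) * cis (2*pi*t))" for t
  proof -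
    have "cmod (of_real (1 - y) * cis (2*pi*t)) < 1"
      using y by (simp only: norm_mult norm_of_real norm_cis mult_1_right)
    thus ?thesis by auto
  qed
  have int: "(\<lambda>t. cmod (1 - of_real (1 - y) * cis (2*pi*t)) powr (-s)) integrable_on {0..c}" for c
    using pos by (intro integrable_continuous_interval continuous_on_powr') (auto intro!: continuous_intros)
  have "1 + 2*pi \<noteq> 0" using pi_gt_zero by linarith
  hence "(1 + 2*pi) powr (-s) * y powr (1 - s) = integral {0..y} (\<lambda>t. ((1 + 2*pi) * y) powr (-s))"
    using y by (simp add: powr_mult powr_add[symmetric] powr_diff mult_ac powr_minus_divide)
  also have "\<dots> \<le> integral {0..y} (\<lambda>t. cmod (1 - of_real (1 - y) * cis (2*pi*t)) powr (-s))"
  proof (rule integral_le[OF integrable_const_ivl int])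
    fix t assume t: "t \<in> {0..y}"
    have "cmod (1 - of_real (1 - y) * cis (2*pi*t)) \<le> (1 - (1 - y)) + 2*pi*t"
      by (rule norm_one_minus_scaled_cis_le) (use y t in auto)
    also have "\<dots> \<le> (1 + 2*pi) * y" using t by (simp add: algebra_simps)
    finally show "((1 + 2*pi) * y) powr (-s) \<le> cmod (1 - of_real (1 - y) * cis (2*pi*t)) powr (-s)"
      using pos s by (intro powr_mono2') auto
  qed
  also have "\<dots> \<le> integral {0..1} (\<lambda>t. cmod (1 - of_real (1 - y) * cis (2*pi*t)) powr (-s))"
    using y by (intro integral_subset_le int) auto
  finally show ?thesis .
qed

text \<open>For \<rho>^2 = 1 - y the previous bound gives M_p(\<rho>, k_\<rho>^l) \<ge> (1 + 2 pi)^(-pl) y^(1 - pl),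
  which is unbounded as y \<rightarrow> 0 exactly because pl > 1.\<close>

lemma radial_kernel_hardy_pow_unbounded:
  assumes p: "0 < p" and pl: "p * real l > 1" and B: "0 < B" and \<delta>: "0 < \<delta>"
  obtains \<rho> where "1 - \<delta> \<le> \<rho>" "\<rho> < 1" "0 \<le> \<rho>" "ennreal B \<le> radial_kernel_hardy_pow p l \<rho>"
proof -
  define s where "s = p * real l"
  define A where "A = (1 + 2*pi) powr (-s)"
  have "1 + 2*pi \<noteq> 0" using pi_gt_zero by linarith
  hence A: "0 < A" by (simp add: A_def)
  define y where "y = min (1/2) (min \<delta> ((B / A) powr (1 / (1 - s))))"
  have y: "0 < y" "y \<le> 1/2" "y \<le> \<delta>" "y \<le> (B / A) powr (1 / (1 - s))" using \<delta> B A by (auto simp: y_def)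
  define \<rho> where "\<rho> = sqrt (1 - y)"
  have \<rho>0: "0 < \<rho>" "\<rho> < 1" "\<rho> * \<rho> = 1 - y" using y by (auto simp: \<rho>_def)
  hence "\<rho> * \<rho> \<le> \<rho> * 1" by (intro mult_left_mono) auto
  with \<rho>0 have \<rho>: "0 < \<rho>" "\<rho> < 1" "1 - y \<le> \<rho>" "\<rho> * \<rho> = 1 - y" by auto
  have "B \<le> A * y powr (1 - s)"
  proof -
    have "((B / A) powr (1 / (1 - s))) powr (1 - s) \<le> y powr (1 - s)"
      using y pl by (intro powr_mono2') (auto simp: s_def)
    moreover have "((B / A) powr (1 / (1 - s))) powr (1 - s) = B / A"
      using pl B A by (simp add: powr_powr s_def)
    ultimately show ?thesis using A by (simp add: field_simps)
  qed
  also have "\<dots> \<le> integral {0..1} (\<lambda>t. cmod (1 - of_real (1 - y) * cis (2*pi*t)) powr (-s))"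
    unfolding A_def using y p by (intro integral_norm_one_minus_cis_powr_ge) (auto simp: s_def)
  also have "\<dots> = circle_mean p (\<lambda>w. kernel (of_real \<rho>) w ^ l) \<rho>"
    unfolding circle_mean_def
  proof (rule integral_cong)
    fix t :: real
    have e: "1 - cnj (of_real \<rho>) * (of_real \<rho> * cis (2*pi*t)) = 1 - of_real (1 - y) * cis (2*pi*t)"
      using \<rho>(4) by (metis complex_cnj_complex_of_real mult.assoc of_real_mult)
    have "cmod (of_real (1 - y) * cis (2*pi*t)) < 1"
      using y by (simp only: norm_mult norm_of_real norm_cis mult_1_right)
    hence "1 - of_real (1 - y) * cis (2*pi*t) \<noteq> 0" by auto
    with norm_kernel_power_powr[of "of_real \<rho>" "of_real \<rho> * cis (2*pi*t)" l p, unfolded e]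
    show "cmod (1 - of_real (1 - y) * cis (2*pi*t)) powr (-s) = cmod (kernel (of_real \<rho>) (of_real \<rho> * cis (2*pi*t)) ^ l) powr p"
      by (simp add: s_def)
  qed
  finally have "ennreal B \<le> ennreal (circle_mean p (\<lambda>w. kernel (of_real \<rho>) w ^ l) \<rho>)" by (rule ennreal_leI)
  also have "\<dots> \<le> radial_kernel_hardy_pow p l \<rho>"
    unfolding radial_kernel_hardy_pow_def using \<rho> p
    by (intro circle_mean_le_hardy_pow continuous_on_kernel_power) auto
  finally have "ennreal B \<le> radial_kernel_hardy_pow p l \<rho>" .
  moreover have "1 - \<delta> \<le> \<rho>" using \<rho>(3) y(3) by simp
  ultimately show ?thesis using \<rho>(1,2) by (intro that) auto
qed

section \<open>Testing the measure with reproducing kernels\<close>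

lemma polar_cis_2pi: obtains \<phi> where "z = of_real (cmod z) * cis (2*pi*\<phi>)"
proof -
  have "z = of_real (cmod z) * cis (Arg z)"
    by (cases "z = 0") (simp_all add: cis_Arg complex_sgn_def scaleR_conv_of_real)
  also have "Arg z = 2*pi*(Arg z / (2*pi))" by simp
  finally show ?thesis by (rule that)
qed

definition kernel_weight :: "real \<Rightarrow> nat \<Rightarrow> real \<Rightarrow> real \<Rightarrow> complex \<Rightarrow> real" where
  "kernel_weight p l \<rho> t z =
     cmod (kernel (of_real \<rho> * cis (2*pi*t)) z ^ l) powr p / enn2real (radial_kernel_hardy_pow p l \<rho>)"

lemma norm_kernel_powr_eq_kernel_weight:
  assumes \<rho>: "0 \<le> \<rho>" "\<rho> < 1" and p: "0 < p"
  shows "cmod (norm_kernel p l (of_real \<rho> * cis (2*pi*t)) z) powr p = kernel_weight p l \<rho> t z"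
proof -
  define E where "E = enn2real (radial_kernel_hardy_pow p l \<rho>)"
  have E: "0 < E" unfolding E_def by (rule radial_kernel_hardy_pow_real(1)[OF \<rho> p])
  have "hardy_norm p (\<lambda>w. kernel (of_real \<rho> * cis (2*pi*t)) w ^ l) = E powr (1/p)"
    unfolding hardy_norm_def hardy_pow_kernel_rotate[OF \<rho> p] E_def ..
  moreover have "(E powr (1/p)) powr p = E" using E p by (simp add: powr_powr)
  ultimately show ?thesis
    using E by (simp add: norm_kernel_def kernel_weight_def norm_divide powr_divide E_def)
qed

lemma continuous_on_kernel_weight:
  assumes \<rho>: "0 \<le> \<rho>" "\<rho> < 1" and p: "0 < p"
  shows "continuous_on (UNIV \<times> cball 0 1) (\<lambda>(t,z). kernel_weight p l \<rho> t z)"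
proof -
  have "1 - cnj (of_real \<rho> * cis (2*pi*t)) * z \<noteq> 0" if "z \<in> cball 0 1" for t z
    using kernel_denominator_bounds(1)[of "of_real \<rho> * cis (2*pi*t)" z] that \<rho> by (simp add: norm_mult)
  hence "continuous_on (UNIV \<times> cball 0 1) (\<lambda>y. kernel (of_real \<rho> * cis (2*pi * fst y)) (snd y) ^ l)"
    unfolding kernel_def by (intro continuous_intros) auto
  hence "continuous_on (UNIV \<times> cball 0 1) (\<lambda>y. cmod (kernel (of_real \<rho> * cis (2*pi * fst y)) (snd y) ^ l) powr p)"
    by (rule continuous_on_norm_powr[OF _ p])
  with radial_kernel_hardy_pow_real(1)[OF \<rho> p, of l] show ?thesis
    unfolding kernel_weight_def case_prod_unfold by (intro continuous_on_divide continuous_on_const) auto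
qed

text \<open>In t, kernel_weight p l \<rho> t z is a rotation of the 1-periodic, even function
  |k_\<rho>(|z| e(u))^l|^p, whose integral over a period is M_p(|z|, k_\<rho>^l) \<le> \<parallel>k_\<rho>^l\<parallel>_p^p.\<close>

lemma integral_kernel_weight_le_1:
  assumes \<rho>: "0 \<le> \<rho>" "\<rho> < 1" and p: "0 < p" and z: "cmod z \<le> 1" and ab: "a \<le> b" "b \<le> a + 1"
  shows "integral {a..b} (\<lambda>t. kernel_weight p l \<rho> t z) \<le> 1"
proof -
  obtain \<phi> where \<phi>: "z = of_real (cmod z) * cis (2*pi*\<phi>)" by (rule polar_cis_2pi)
  define r where "r = cmod z"
  have r: "0 \<le> r" "r \<le> 1" using z by (auto simp: r_def)
  define E where "E = enn2real (radial_kernel_hardy_pow p l \<rho>)"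
  have E: "0 < E" unfolding E_def by (rule radial_kernel_hardy_pow_real(1)[OF \<rho> p])
  define g where "g = (\<lambda>u. cmod (kernel (of_real \<rho>) (of_real r * cis (2*pi*u)) ^ l) powr p)"
  have a: "(of_real \<rho> :: complex) \<in> ball 0 1" using \<rho> by simp
  have cg: "continuous_on UNIV g" unfolding g_def
    by (rule continuous_on_norm_powr[OF continuous_on_circle_param[OF continuous_on_kernel_power[OF a]] p]) (use r in auto)
  have even: "g (- u) = g u" for u
  proof -
    have "kernel (of_real \<rho>) (of_real r * cis (2*pi*(-u))) = cnj (kernel (of_real \<rho>) (of_real r * cis (2*pi*u)))"
      by (simp add: kernel_def cis_cnj)
    thus ?thesis by (simp add: g_def norm_power)
  qed
  have eq: "kernel_weight p l \<rho> t z = g (t + - \<phi>) / E" for t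
  proof -
    have "z * cis (-(2*pi*t)) = of_real r * cis (2*pi*(-(t + - \<phi>)))"
      by (subst \<phi>) (simp add: r_def mult.assoc cis_mult right_diff_distrib)
    hence "cmod (kernel (of_real \<rho> * cis (2*pi*t)) z ^ l) powr p = g (-(t + - \<phi>))"
      by (simp only: kernel_rotate g_def)
    thus ?thesis using even[of "t - \<phi>"] by (simp add: kernel_weight_def E_def)
  qed
  have "integral {a..b} (\<lambda>t. g (t + - \<phi>)) = integral {a - \<phi>..b - \<phi>} g"
    using integral_shift_real_ivl[where a="a - \<phi>" and b="b - \<phi>" and c="-\<phi>" and f=g] by simp
  also have "\<dots> \<le> integral {0..1} g"
    by (rule integral_periodic_le[OF cg]) (use ab in \<open>auto simp: g_def cis_2pi_plus_1\<close>)
  also have "\<dots> \<le> circle_mean p (\<lambda>w. kernel (of_real \<rho>) w ^ l) 1"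
    using circle_mean_radial_kernel_mono[OF \<rho> r p] by (simp add: g_def circle_mean_def)
  also have "\<dots> \<le> E"
  proof -
    have "ennreal (circle_mean p (\<lambda>w. kernel (of_real \<rho>) w ^ l) 1) \<le> ennreal E"
      using boundary_circle_mean_le_hardy_pow[OF continuous_on_kernel_power[OF a] p, of l]
        radial_kernel_hardy_pow_real(2)[OF \<rho> p, of l]
      unfolding E_def radial_kernel_hardy_pow_def by metis
    thus ?thesis using E by (simp add: ennreal_le_iff)
  qed
  finally show ?thesis using E by (simp add: eq divide_right_mono)
qed

lemma kernel_weight_far_le:
  assumes \<rho>: "0 \<le> \<rho>" "\<rho> < 1" and p: "0 < p" and z: "cmod z \<le> 1" and \<delta>: "0 < \<delta>" "1 - \<rho> \<le> \<delta> / 2"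
    and far: "\<delta> \<le> cmod (z - cis (2*pi*t))"
  shows "kernel_weight p l \<rho> t z \<le> (\<delta>/2) powr (-(p * real l)) / enn2real (radial_kernel_hardy_pow p l \<rho>)"
proof -
  let ?e = "cis (2*pi*t)"
  have "cnj ?e * ?e = 1" by (simp add: cis_cnj cis_mult)
  hence "1 - cnj (of_real \<rho> * ?e) * z = cnj ?e * (?e - of_real \<rho> * z)" by (simp add: algebra_simps)
  hence D: "cmod (1 - cnj (of_real \<rho> * ?e) * z) = cmod (?e - of_real \<rho> * z)" by (simp add: norm_mult)
  have "cmod (z - ?e) \<le> cmod (?e - of_real \<rho> * z) + cmod (of_real \<rho> * z - z)"
    using norm_triangle_ineq[of "?e - of_real \<rho> * z" "of_real \<rho> * z - z"] by (simp add: norm_minus_commute)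
  moreover have "cmod (of_real \<rho> * z - z) = (1 - \<rho>) * cmod z"
  proof -
    have "of_real \<rho> * z - z = - (of_real (1 - \<rho>) * z)" by (simp add: algebra_simps)
    thus ?thesis using \<rho> by (simp only: norm_minus_cancel norm_mult norm_of_real abs_of_nonneg diff_ge_0_iff_ge less_imp_le)
  qed
  moreover have "(1 - \<rho>) * cmod z \<le> \<delta> / 2" using \<rho> \<delta> z by (smt (verit) mult_left_le norm_ge_zero)
  ultimately have low: "\<delta> / 2 \<le> cmod (1 - cnj (of_real \<rho> * ?e) * z)" using far D by linarith
  hence "1 - cnj (of_real \<rho> * ?e) * z \<noteq> 0" using \<delta> by auto
  hence "cmod (kernel (of_real \<rho> * ?e) z ^ l) powr p = cmod (1 - cnj (of_real \<rho> * ?e) * z) powr (-(p * real l))"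
    by (rule norm_kernel_power_powr)
  also have "\<dots> \<le> (\<delta>/2) powr (-(p * real l))"
    using low \<delta> p by (intro powr_mono2') auto
  finally show ?thesis
    unfolding kernel_weight_def using radial_kernel_hardy_pow_real(1)[OF \<rho> p, of l] by (simp add: divide_right_mono)
qed

lemma kernel_weight_measurable:
  assumes \<rho>: "0 \<le> \<rho>" "\<rho> < 1" and p: "0 < p" and sets: "sets \<mu> = sets borel"
  shows "(\<lambda>(t, z). ennreal (kernel_weight p l \<rho> t z) * indicator (cball 0 1) z * indicator {a..b} t)
           \<in> borel_measurable (lborel \<Otimes>\<^sub>M \<mu>)"
proof -
  have "sets (lborel \<Otimes>\<^sub>M \<mu>) = sets (borel \<Otimes>\<^sub>M (borel :: complex measure))"
    by (rule sets_pair_measure_cong) (simp_all add: sets)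
  also have "\<dots> = sets borel" by (rule arg_cong[where f=sets, OF borel_prod])
  finally have sb: "sets (lborel \<Otimes>\<^sub>M \<mu>) = sets (borel :: (real \<times> complex) measure)" .
  have "(\<lambda>y. indicator (UNIV \<times> cball (0::complex) 1) y *\<^sub>R (\<lambda>(t,z). kernel_weight p l \<rho> t z) y) \<in> borel_measurable borel"
    by (rule borel_measurable_continuous_on_indicator[OF _ continuous_on_kernel_weight[OF \<rho> p]])
       (intro borel_closed closed_Times; simp)
  hence "(\<lambda>y. ennreal (indicator (UNIV \<times> cball (0::complex) 1) y *\<^sub>R (\<lambda>(t,z). kernel_weight p l \<rho> t z) y)
      * indicator ({a..b} \<times> UNIV) y) \<in> borel_measurable (borel :: (real \<times> complex) measure)"
    by (intro borel_measurable_times_ennreal measurable_compose[OF _ measurable_ennreal] borel_measurable_indicator)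
       (auto intro: borel_closed closed_Times)
  moreover have "(\<lambda>(t, z). ennreal (kernel_weight p l \<rho> t z) * indicator (cball 0 1) z * indicator {a..b} t)
      = (\<lambda>y. ennreal (indicator (UNIV \<times> cball (0::complex) 1) y *\<^sub>R (\<lambda>(t,z). kernel_weight p l \<rho> t z) y)
          * indicator ({a..b} \<times> UNIV) y)"
    by (auto simp: indicator_def fun_eq_iff)
  ultimately show ?thesis by (simp add: measurable_cong_sets[OF sb refl])
qed

definition arc_neighbourhood :: "real \<Rightarrow> real \<Rightarrow> real \<Rightarrow> complex set" where
  "arc_neighbourhood a b \<delta> = cball 0 1 \<inter> (\<Union>t\<in>{a..b}. ball (cis (2*pi*t)) \<delta>)"

lemma arc_neighbourhood_in_sets: "arc_neighbourhood a b \<delta> \<in> sets borel"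
  unfolding arc_neighbourhood_def by (intro sets.Int borel_closed borel_open open_UN) auto

lemma nn_integral_kernel_weight_le:
  fixes l :: nat
  assumes \<rho>: "0 \<le> \<rho>" "\<rho> < 1" and p: "0 < p" and \<delta>: "0 < \<delta>" "1 - \<rho> \<le> \<delta> / 2" and ab: "a < b" "b \<le> a + 1"
  defines "\<epsilon> \<equiv> (\<delta>/2) powr (-(p * real l)) / enn2real (radial_kernel_hardy_pow p l \<rho>)"
  shows "(\<integral>\<^sup>+ t. ennreal (kernel_weight p l \<rho> t z) * indicator (cball 0 1) z * indicator {a..b} t \<partial>lborel)
       \<le> indicator (arc_neighbourhood a b \<delta>) z + ennreal \<epsilon>"
proof (cases "z \<in> cball 0 1")
  case z: True
  have cont: "continuous_on UNIV (\<lambda>t. kernel_weight p l \<rho> t z)"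
    by (rule continuous_on_compose2[OF continuous_on_kernel_weight[OF \<rho> p], where f="\<lambda>t. (t, z)", simplified])
       (use z in \<open>auto intro!: continuous_intros\<close>)
  hence hi: "((\<lambda>t. kernel_weight p l \<rho> t z) has_integral integral {a..b} (\<lambda>t. kernel_weight p l \<rho> t z)) {a..b}"
    by (intro integrable_integral integrable_continuous_interval continuous_on_subset[OF cont]) auto
  have "(\<integral>\<^sup>+ t. ennreal (kernel_weight p l \<rho> t z) * indicator (cball 0 1) z * indicator {a..b} t \<partial>lborel)
      = ennreal (integral {a..b} (\<lambda>t. kernel_weight p l \<rho> t z))"
    using z by (simp, intro nn_integral_has_integral_lebesgue'[OF _ hi]) (simp add: kernel_weight_def)
  also have "\<dots> \<le> indicator (arc_neighbourhood a b \<delta>) z + ennreal \<epsilon>"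
  proof (cases "z \<in> arc_neighbourhood a b \<delta>")
    case True
    have "integral {a..b} (\<lambda>t. kernel_weight p l \<rho> t z) \<le> 1"
      by (rule integral_kernel_weight_le_1[OF \<rho> p]) (use z ab in auto)
    thus ?thesis using True by (simp add: add_increasing2 ennreal_le_1)
  next
    case False
    have far: "\<delta> \<le> cmod (z - cis (2*pi*t))" if "t \<in> {a..b}" for t
      using False z that by (auto simp: arc_neighbourhood_def dist_norm norm_minus_commute not_less)
    have "integral {a..b} (\<lambda>t. kernel_weight p l \<rho> t z) \<le> integral {a..b} (\<lambda>t. \<epsilon>)"
      by (rule integral_le[OF has_integral_integrable[OF hi] integrable_const_ivl])
         (use kernel_weight_far_le[OF \<rho> p _ \<delta> far] z in \<open>auto simp: \<epsilon>_def\<close>)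
    also have "\<dots> = (b - a) * \<epsilon>" using ab by simp
    also have "\<dots> \<le> \<epsilon>" using ab by (intro mult_left_le_one_le) (auto simp: \<epsilon>_def)
    finally show ?thesis using False by (simp add: ennreal_leI)
  qed
  finally show ?thesis .
qed simp

text \<open>Integrate condition (ii) for \<lambda> = \<rho> e(t) over t \<in> [a, b] and apply Fubini; as
  \<rho> \<rightarrow> 1 the contribution of points away from the arc vanishes.\<close>

lemma emeasure_arc_neighbourhood_ge:
  fixes \<mu> :: "complex measure"
  assumes sets: "sets \<mu> = sets borel" and fin: "finite_measure \<mu>" and p: "0 < p" and pl: "p * real l > 1"
    and C: "0 < C"
    and cond: "\<forall>a\<in>ball 0 1. (\<integral>\<^sup>+ z\<in>cball 0 1. ennreal (cmod (norm_kernel p l a z) powr p) \<partial>\<mu>) \<ge> ennreal C"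
    and ab: "a < b" "b \<le> a + 1" and \<delta>: "0 < \<delta>"
  shows "ennreal (C * (b - a)) \<le> emeasure \<mu> (arc_neighbourhood a b \<delta>)"
proof (rule ennreal_le_epsilon)
  fix \<epsilon> :: real assume \<epsilon>: "0 < \<epsilon>"
  interpret finite_measure \<mu> by (rule fin)
  interpret P: pair_sigma_finite lborel \<mu> by unfold_locales
  define M where "M = measure \<mu> (space \<mu>)"
  have M: "0 \<le> M" "emeasure \<mu> (space \<mu>) = ennreal M" by (auto simp: M_def emeasure_eq_measure)
  define D where "D = (\<delta>/2) powr (-(p * real l))"
  have D: "0 < D" using \<delta> by (simp add: D_def)
  obtain \<rho> where \<rho>: "1 - \<delta>/2 \<le> \<rho>" "\<rho> < 1" "0 \<le> \<rho>" "ennreal (D * (M + 1) / \<epsilon>) \<le> radial_kernel_hardy_pow p l \<rho>"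
    using radial_kernel_hardy_pow_unbounded[OF p pl, of "D * (M + 1) / \<epsilon>" "\<delta>/2"] D M \<epsilon> \<delta> by auto
  define E where "E = enn2real (radial_kernel_hardy_pow p l \<rho>)"
  have E: "0 < E" unfolding E_def by (rule radial_kernel_hardy_pow_real(1)[OF \<rho>(3,2) p])
  have "ennreal (D * (M + 1) / \<epsilon>) \<le> ennreal E"
    using \<rho>(4) radial_kernel_hardy_pow_real(2)[OF \<rho>(3,2) p, of l] unfolding E_def by metis
  hence "D * (M + 1) / \<epsilon> \<le> E" using E by (simp add: ennreal_le_iff)
  hence small: "D / E * M \<le> \<epsilon>"
    using \<epsilon> E D M by (simp add: field_simps)
  define F where "F = (\<lambda>t z. ennreal (kernel_weight p l \<rho> t z) * indicator (cball 0 1) z * indicator {a..b} t)"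
  have "ennreal (C * (b - a)) = (\<integral>\<^sup>+ t. ennreal C * indicator {a..b} t \<partial>lborel)"
    using ab C by (simp add: nn_integral_cmult_indicator ennreal_mult)
  also have "\<dots> \<le> (\<integral>\<^sup>+ t. (\<integral>\<^sup>+ z. F t z \<partial>\<mu>) \<partial>lborel)"
  proof (intro nn_integral_mono)
    fix t :: real
    have "of_real \<rho> * cis (2*pi*t) \<in> ball 0 1" using \<rho> by (simp add: norm_mult)
    hence "ennreal C \<le> (\<integral>\<^sup>+ z\<in>cball 0 1. ennreal (cmod (norm_kernel p l (of_real \<rho> * cis (2*pi*t)) z) powr p) \<partial>\<mu>)"
      using cond by blast
    hence "ennreal C \<le> (\<integral>\<^sup>+ z\<in>cball 0 1. ennreal (kernel_weight p l \<rho> t z) \<partial>\<mu>)"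
      by (simp only: norm_kernel_powr_eq_kernel_weight[OF \<rho>(3,2) p])
    thus "ennreal C * indicator {a..b} t \<le> (\<integral>\<^sup>+ z. F t z \<partial>\<mu>)"
      unfolding F_def by (cases "t \<in> {a..b}") simp_all
  qed
  also have "\<dots> = (\<integral>\<^sup>+ z. (\<integral>\<^sup>+ t. F t z \<partial>lborel) \<partial>\<mu>)"
    unfolding F_def by (rule P.Fubini'[OF kernel_weight_measurable[OF \<rho>(3,2) p sets], symmetric])
  also have "\<dots> \<le> (\<integral>\<^sup>+ z. indicator (arc_neighbourhood a b \<delta>) z + ennreal (D / E) \<partial>\<mu>)"
    unfolding F_def D_def E_def using \<rho> \<delta> ab
    by (intro nn_integral_mono nn_integral_kernel_weight_le[OF \<rho>(3,2) p]) auto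
  also have "\<dots> = emeasure \<mu> (arc_neighbourhood a b \<delta>) + ennreal (D / E) * emeasure \<mu> (space \<mu>)"
    using arc_neighbourhood_in_sets sets by (subst nn_integral_add) auto
  also have "ennreal (D / E) * emeasure \<mu> (space \<mu>) \<le> ennreal \<epsilon>"
    using small M D E by (simp add: ennreal_mult[symmetric] ennreal_leI)
  finally show "ennreal (C * (b - a)) \<le> emeasure \<mu> (arc_neighbourhood a b \<delta>) + ennreal \<epsilon>"
    by (simp add: add_left_mono)
qed

lemma emeasure_closed_arc_ge:
  fixes \<mu> :: "complex measure"
  assumes sets: "sets \<mu> = sets borel" and fin: "finite_measure \<mu>" and p: "0 < p" and pl: "p * real l > 1"
    and C: "0 < C"
    and cond: "\<forall>a\<in>ball 0 1. (\<integral>\<^sup>+ z\<in>cball 0 1. ennreal (cmod (norm_kernel p l a z) powr p) \<partial>\<mu>) \<ge> ennreal C"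
    and ab: "a < b" "b \<le> a + 1"
  shows "ennreal (C * (b - a)) \<le> emeasure \<mu> ((\<lambda>t. cis (2*pi*t)) ` {a..b})"
proof -
  interpret finite_measure \<mu> by (rule fin)
  define W where "W n = arc_neighbourhood a b (1 / real (Suc n))" for n
  have dec: "decseq W"
  proof (rule decseq_SucI)
    fix n
    have "1 / real (Suc (Suc n)) \<le> 1 / real (Suc n)" by (simp add: frac_le)
    thus "W (Suc n) \<subseteq> W n" unfolding W_def arc_neighbourhood_def by fastforce
  qed
  have rng: "range W \<subseteq> sets \<mu>" using arc_neighbourhood_in_sets sets by (auto simp: W_def)
  have inter: "(\<Inter>n. W n) = (\<lambda>t. cis (2*pi*t)) ` {a..b}"
  proof
    show "(\<lambda>t. cis (2*pi*t)) ` {a..b} \<subseteq> (\<Inter>n. W n)" by (auto simp: W_def arc_neighbourhood_def)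
    have "(\<Inter>n. W n) \<subseteq> closure ((\<lambda>t. cis (2*pi*t)) ` {a..b})"
    proof
      fix z assume z: "z \<in> (\<Inter>n. W n)"
      show "z \<in> closure ((\<lambda>t. cis (2*pi*t)) ` {a..b})"
        unfolding closure_approachable
      proof (intro allI impI)
        fix e :: real assume e: "0 < e"
        obtain n :: nat where n: "1 / real (Suc n) < e" using e by (metis nat_approx_posE)
        from z have "z \<in> W n" by blast
        then obtain t where "t \<in> {a..b}" "dist (cis (2*pi*t)) z < 1 / real (Suc n)"
          by (auto simp: W_def arc_neighbourhood_def)
        with n show "\<exists>y\<in>(\<lambda>t. cis (2*pi*t)) ` {a..b}. dist y z < e" by (intro bexI[of _ "cis (2*pi*t)"]) auto
      qed
    qed
    thus "(\<Inter>n. W n) \<subseteq> (\<lambda>t. cis (2*pi*t)) ` {a..b}" using closed_arc_image by simp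
  qed
  have "ennreal (C * (b - a)) \<le> (INF n. emeasure \<mu> (W n))"
    unfolding W_def by (intro INF_greatest emeasure_arc_neighbourhood_ge[OF sets fin p pl C cond ab]) simp
  also have "\<dots> = emeasure \<mu> (\<Inter>n. W n)" by (rule INF_emeasure_decseq[OF rng dec]) simp
  finally show ?thesis unfolding inter .
qed

text \<open>The open arc e((a, b)) contains the closed arcs e([a + \<eta>, b - \<eta>]), whose
  \<mu>-measure is at least C (b - a - 2\<eta>).\<close>

lemma kernel_test_imp_arc_bound:
  fixes \<mu> :: "complex measure"
  assumes sets: "sets \<mu> = sets borel" and fin: "finite_measure \<mu>" and p: "0 < p" and pl: "p * real l > 1"
    and C: "0 < C"
    and cond: "\<forall>a\<in>ball 0 1. (\<integral>\<^sup>+ z\<in>cball 0 1. ennreal (cmod (norm_kernel p l a z) powr p) \<partial>\<mu>) \<ge> ennreal C"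
    and I: "is_arc I"
  shows "emeasure \<mu> I \<ge> ennreal C * emeasure circle_measure I"
proof -
  obtain a b where ab: "a < b" "b \<le> a + 1" and O: "(\<lambda>t. cis (2*pi*t)) ` {a<..<b} \<subseteq> I"
      and E: "I \<subseteq> (\<lambda>t. cis (2*pi*t)) ` {a..b}"
    using I unfolding is_arc_def by blast
  have low: "ennreal (C * (b - a)) \<le> emeasure \<mu> I"
  proof (rule ennreal_le_epsilon)
    fix \<epsilon> :: real assume \<epsilon>: "0 < \<epsilon>"
    define \<eta> where "\<eta> = min ((b - a) / 4) (\<epsilon> / (2 * C))"
    have \<eta>: "0 < \<eta>" "\<eta> \<le> (b - a) / 4" "2 * C * \<eta> \<le> \<epsilon>"
      using ab \<epsilon> C by (auto simp: \<eta>_def min_def field_simps)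
    have "ennreal (C * (b - a)) = ennreal (C * ((b - \<eta>) - (a + \<eta>))) + ennreal (2 * C * \<eta>)"
    proof -
      have "0 \<le> C * ((b - \<eta>) - (a + \<eta>))" using C \<eta> by (intro mult_nonneg_nonneg) auto
      with C \<eta> show ?thesis by (subst ennreal_plus[symmetric]) (auto simp: algebra_simps)
    qed
    also have "ennreal (C * ((b - \<eta>) - (a + \<eta>))) \<le> emeasure \<mu> ((\<lambda>t. cis (2*pi*t)) ` {a + \<eta>..b - \<eta>})"
      using \<eta> ab by (intro emeasure_closed_arc_ge[OF sets fin p pl C cond]) auto
    also have "\<dots> \<le> emeasure \<mu> I"
    proof (rule emeasure_mono)
      have "{a + \<eta>..b - \<eta>} \<subseteq> {a<..<b}" using \<eta> by auto
      thus "(\<lambda>t. cis (2*pi*t)) ` {a + \<eta>..b - \<eta>} \<subseteq> I" using O by blast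
      show "I \<in> sets \<mu>" using arc_in_sets[OF ab O E] sets by simp
    qed
    also have "ennreal (2 * C * \<eta>) \<le> ennreal \<epsilon>" using \<eta>(3) by (rule ennreal_leI)
    finally show "ennreal (C * (b - a)) \<le> emeasure \<mu> I + ennreal \<epsilon>" by simp
  qed
  have "emeasure circle_measure I \<le> emeasure circle_measure ((\<lambda>t. cis (2*pi*t)) ` {a..b})"
    using closed_arc_image by (intro emeasure_mono[OF E]) simp
  also have "\<dots> \<le> ennreal (b - a)" by (rule emeasure_circle_closed_arc_le[OF ab])
  finally have "ennreal C * emeasure circle_measure I \<le> ennreal (C * (b - a))"
    using C by (simp add: ennreal_mult' mult_left_mono)
  with low show ?thesis by simp
qed

lemma arc_bound_imp_hardy_bound:
  fixes \<mu> :: "complex measure"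
  assumes sets: "sets \<mu> = sets borel" and p: "0 < p" and C: "0 < C"
    and arcs: "\<And>I. is_arc I \<Longrightarrow> emeasure \<mu> I \<ge> ennreal C * emeasure circle_measure I"
    and cf: "continuous_on (cball 0 1) f" and hf: "f holomorphic_on ball 0 1"
  shows "(\<integral>\<^sup>+ z\<in>cball 0 1. ennreal (cmod (f z) powr p) \<partial>\<mu>) \<ge> ennreal C * hardy_pow p f"
proof -
  have "ennreal C * hardy_pow p f \<le> ennreal C * ennreal (circle_mean p f 1)"
    by (intro mult_left_mono hardy_pow_le_circle_mean[OF cf hf p]) simp
  also have "\<dots> = ennreal (C * integral {0..1} (\<lambda>t. cmod (f (cis (2*pi*t))) powr p))"
    using C by (simp add: ennreal_mult' circle_mean_def)
  also have "\<dots> \<le> (\<integral>\<^sup>+ z\<in>cball 0 1. ennreal (cmod (f z) powr p) \<partial>\<mu>)"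
    by (rule arc_bound_imp_circle_integral_le[OF sets C arcs continuous_on_norm_powr[OF cf p]]) simp_all
  finally show ?thesis .
qed

theorem theorem2p1:
  fixes p :: real and \<mu> :: "complex measure" and l :: nat
  assumes "0 < p"
    and "sets \<mu> = sets borel"
    and "finite_measure \<mu>"
    and "emeasure \<mu> (- cball 0 1) = 0"
    and "0 < l" and "p * real l > 1"
  defines "cond_i \<equiv> (\<exists>C>0. \<forall>f. continuous_on (cball 0 1) f \<and> in_hardy p f \<longrightarrow>
              (\<integral>\<^sup>+ z\<in>cball 0 1. ennreal (cmod (f z) powr p) \<partial>\<mu>) \<ge> ennreal C * hardy_pow p f)"
    and "cond_ii \<equiv> (\<exists>C>0. \<forall>a\<in>ball 0 1.
              (\<integral>\<^sup>+ z\<in>cball 0 1. ennreal (cmod (norm_kernel p l a z) powr p) \<partial>\<mu>) \<ge> ennreal C)"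
    and "cond_iii \<equiv> (\<exists>C>0. \<forall>I. is_arc I \<longrightarrow> emeasure \<mu> I \<ge> ennreal C * emeasure circle_measure I)"
  shows "(cond_i \<longleftrightarrow> cond_ii) \<and> (cond_ii \<longleftrightarrow> cond_iii)"
proof -
  have "cond_i \<Longrightarrow> cond_ii"
  proof -
    assume cond_i
    then obtain C where C: "0 < C" "\<And>f. continuous_on (cball 0 1) f \<Longrightarrow> in_hardy p f \<Longrightarrow>
        (\<integral>\<^sup>+ z\<in>cball 0 1. ennreal (cmod (f z) powr p) \<partial>\<mu>) \<ge> ennreal C * hardy_pow p f"
      unfolding cond_i_def by blast
    have "(\<integral>\<^sup>+ z\<in>cball 0 1. ennreal (cmod (norm_kernel p l a z) powr p) \<partial>\<mu>) \<ge> ennreal C"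
      if "a \<in> ball 0 1" for a
      using C(2)[of "norm_kernel p l a"] norm_kernel_properties[OF that assms(1)] by (simp add: in_hardy_def)
    with C(1) show cond_ii unfolding cond_ii_def by blast
  qed
  moreover have "cond_ii \<Longrightarrow> cond_iii"
    unfolding cond_ii_def cond_iii_def using kernel_test_imp_arc_bound[OF assms(2,3,1,6)] by blast
  moreover have "cond_iii \<Longrightarrow> cond_i"
    unfolding cond_i_def cond_iii_def in_hardy_def using arc_bound_imp_hardy_bound[OF assms(2,1)] by blast
  ultimately show ?thesis by blast
qed

end
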